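(* Let $I=(t_0,t_1)\subset\mathbb{R}$ (possibly unbounded), let $f:I\to\mathbb{R}$ be continuous, and let $b<d$ be real numbers with $\limsup_{t\to t_0^+}f(t)<b<d<\liminf_{t\to t_1^-}f(t)$. Then the number of bars of the zero-dimensional persistence diagram $\mathbf{PH}_0(f)$ straddling $[b,d]$, counted with multiplicity and including the essential bar, is finite and equals the number of windings of $f$ around $[b,d]$ plus one.
   Context: For a continuous $f$ on an interval $I$, $\mathbf{PH}_0(f)$ is the zero-dimensional persistent homology of the sublevel-set filtration $X_s=\{t\in I: f(t)\le s\}$, with field coefficients. It decomposes into bars $[b',d']$, recorded as points $(b',d')$ with $b'<d'$. Each bar is born at a local minimum value $b'$ and dies at the level $d'$ where its component merges with a component having a lower minimum (elder rule). The essential bar is $(\inf f,\sup f)$. A bar $[b',d']$ straddles $[b,d]$ if $b'\le b<d\le d'$. Windings: set $t_0^b=t_0$ and, for $k\ge1$, $t_k^d=\min\{t\in I: t>t_{k-1}^b, f(t)=d\}$ and $t_k^b=\min\{t\in I: t>t_k^d, f(t)=b\}$. A minimum over an empty set is defined to be $t_1$. A winding of $f$ around $[b,d]$ is an index $k\ge1$ with $t_k^b\in I$, i.e. a pair $(t_k^d,t_k^b)$ of a passage from level $d$ down to level $b$. *)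

theory Defs
  imports "HOL-Analysis.Analysis"
begin

definition Ioo_ereal :: "ereal \<Rightarrow> ereal \<Rightarrow> real set" where
  "Ioo_ereal t0 t1 = {t. t0 < ereal t \<and> ereal t < t1}"

definition left_end_filter :: "ereal \<Rightarrow> real filter" where
  "left_end_filter t0 = (if t0 = -\<infinity> then at_bot else at_right (real_of_ereal t0))"

definition right_end_filter :: "ereal \<Rightarrow> real filter" where
  "right_end_filter t1 = (if t1 = \<infinity> then at_top else at_left (real_of_ereal t1))"

definition sublevel :: "(real \<Rightarrow> real) \<Rightarrow> ereal \<Rightarrow> ereal \<Rightarrow> real \<Rightarrow> real set" where
  "sublevel f t0 t1 s = {t \<in> Ioo_ereal t0 t1. f t \<le> s}"

definition comps :: "(real \<Rightarrow> real) \<Rightarrow> ereal \<Rightarrow> ereal \<Rightarrow> real \<Rightarrow> real set set" where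
  "comps f t0 t1 s = {connected_component_set (sublevel f t0 t1 s) x | x. x \<in> sublevel f t0 t1 s}"

text \<open>H_0(X_s; k): the free k-vector space on the components of X_s, as finitely
  supported functions on the set of components.\<close>
definition PHvec :: "(real \<Rightarrow> real) \<Rightarrow> ereal \<Rightarrow> ereal \<Rightarrow> real \<Rightarrow> (real set \<Rightarrow> 'k::field) set" where
  "PHvec f t0 t1 s = {w. finite {C. w C \<noteq> 0} \<and> {C. w C \<noteq> 0} \<subseteq> comps f t0 t1 s}"

text \<open>Structure map H_0(X_s) \<rightarrow> H_0(X_t) (s \<le> t) induced by inclusion: a component
  C of X_s is sent to the component of X_t containing it.\<close>
definition PHmap :: "(real \<Rightarrow> real) \<Rightarrow> ereal \<Rightarrow> ereal \<Rightarrow> real \<Rightarrow> real \<Rightarrow>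
    (real set \<Rightarrow> 'k::field) \<Rightarrow> (real set \<Rightarrow> 'k)" where
  "PHmap f t0 t1 s t w = (\<lambda>C'. if C' \<in> comps f t0 t1 t
       then (\<Sum>C \<in> {C. w C \<noteq> 0 \<and> C \<subseteq> C'}. w C) else 0)"

text \<open>A barcode (interval decomposition) of PH_0(f): a family of intervals J a, indexed
  by a \<in> 'i (with multiplicity), together with vectors v a s such that
  e_a(s) \<mapsto> v a s is an isomorphism of persistence modules from the direct sum of the
  interval modules k_{J a} onto PH_0(f): for every s the v a s with s \<in> J a form a
  basis of H_0(X_s), and the structure maps send v a s to v a t if t \<in> J a and to 0
  otherwise.\<close>
definition PH0_barcode :: "(real \<Rightarrow> real) \<Rightarrow> ereal \<Rightarrow> ereal \<Rightarrow> ('i \<Rightarrow> real set)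
    \<Rightarrow> ('i \<Rightarrow> real \<Rightarrow> real set \<Rightarrow> 'k::field) \<Rightarrow> bool" where
  "PH0_barcode f t0 t1 J v \<longleftrightarrow>
     (\<forall>a. J a \<noteq> {} \<and> is_interval (J a)) \<and>
     (\<forall>a s. s \<in> J a \<longrightarrow> v a s \<in> PHvec f t0 t1 s) \<and>
     (\<forall>a s t. s \<le> t \<and> s \<in> J a \<longrightarrow>
        PHmap f t0 t1 s t (v a s) = (if t \<in> J a then v a t else (\<lambda>_. 0))) \<and>
     (\<forall>s. \<forall>w \<in> PHvec f t0 t1 s. \<exists>!(g::'i \<Rightarrow> 'k).
        (\<forall>a. g a \<noteq> 0 \<longrightarrow> s \<in> J a) \<and> finite {a. g a \<noteq> 0} \<and>
        w = (\<lambda>C. \<Sum>a\<in>{a. g a \<noteq> 0}. g a * v a s C))"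

definition bar_birth :: "real set \<Rightarrow> ereal" where
  "bar_birth J = Inf (ereal ` J)"

definition bar_death :: "real set \<Rightarrow> ereal" where
  "bar_death J = Sup (ereal ` J)"

definition straddles :: "real set \<Rightarrow> real \<Rightarrow> real \<Rightarrow> bool" where
  "straddles J b d \<longleftrightarrow> bar_birth J \<le> ereal b \<and> ereal b < ereal d \<and> ereal d \<le> bar_death J"

definition first_hit :: "(real \<Rightarrow> real) \<Rightarrow> ereal \<Rightarrow> ereal \<Rightarrow> real \<Rightarrow> ereal \<Rightarrow> ereal" where
  "first_hit f t0 t1 c \<tau> =
     (let S = {t \<in> Ioo_ereal t0 t1. \<tau> < ereal t \<and> f t = c}
      in if S = {} then t1 else Inf (ereal ` S))"

text \<open>t_k^b (and t_k^d = first_hit f t0 t1 d (t_{k-1}^b)).\<close>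
fun wind_b :: "(real \<Rightarrow> real) \<Rightarrow> ereal \<Rightarrow> ereal \<Rightarrow> real \<Rightarrow> real \<Rightarrow> nat \<Rightarrow> ereal" where
  "wind_b f t0 t1 b d 0 = t0"
| "wind_b f t0 t1 b d (Suc k) = first_hit f t0 t1 b (first_hit f t0 t1 d (wind_b f t0 t1 b d k))"

definition windings :: "(real \<Rightarrow> real) \<Rightarrow> ereal \<Rightarrow> ereal \<Rightarrow> real \<Rightarrow> real \<Rightarrow> nat set" where
  "windings f t0 t1 b d = {k. 1 \<le> k \<and> t0 < wind_b f t0 t1 b d k \<and> wind_b f t0 t1 b d k < t1}"

end

theory Submission
  imports Defs "HOL-Library.Function_Algebras"
begin

text \<open>The structure map of PH_0(f) from level s to level t has rank equal to the number of bars
  containing s and t, read off from the barcode, and to the number of components of X_t that meet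
  X_s, read off from the sublevel sets.  Near the ends of I the function is below b on the left and
  above d on the right, so all windings happen in a compact interval, where uniform continuity
  spaces them apart; hence there are finitely many, say n.  The winding times cut I into ascents
  from level at most b to level d and descents from d back to b; for s slightly above b and t
  slightly below d every component of X_t meeting X_s contains the start of exactly one ascent, so
  the rank is n + 1.  Finally, as s decreases to b and t increases to d, the bars containing s and
  t decrease to the bars straddling [b, d].\<close>

lemma sublevel_mono: "s \<le> t \<Longrightarrow> sublevel f t0 t1 s \<subseteq> sublevel f t0 t1 t"
  unfolding sublevel_def by auto

lemma connected_component_in_comps:
  "x \<in> sublevel f t0 t1 s \<Longrightarrow> connected_component_set (sublevel f t0 t1 s) x \<in> comps f t0 t1 s"
  unfolding comps_def by auto

lemma comps_subset_nonempty:
  assumes "C \<in> comps f t0 t1 s"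
  shows "C \<subseteq> sublevel f t0 t1 s" "C \<noteq> {}"
proof -
  obtain x where x: "x \<in> sublevel f t0 t1 s" "C = connected_component_set (sublevel f t0 t1 s) x"
    using assms unfolding comps_def by auto
  then show "C \<subseteq> sublevel f t0 t1 s"
    using connected_component_subset by simp
  have "x \<in> C" using x by simp
  then show "C \<noteq> {}" by auto
qed

lemma comps_eq_connected_component:
  assumes "C \<in> comps f t0 t1 s" "x \<in> C"
  shows "C = connected_component_set (sublevel f t0 t1 s) x"
  using assms connected_component_eq unfolding comps_def by blast

lemma comps_subset_of_meet:
  assumes "s \<le> t" "C \<in> comps f t0 t1 s" "C' \<in> comps f t0 t1 t" "x \<in> C" "x \<in> C'"
  shows "C \<subseteq> C'"
proof -
  have "C = connected_component_set (sublevel f t0 t1 s) x"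
    using comps_eq_connected_component[OF assms(2,4)] .
  also have "\<dots> \<subseteq> connected_component_set (sublevel f t0 t1 t) x"
    by (rule connected_component_mono[OF sublevel_mono[OF assms(1)]])
  also have "\<dots> = C'" using comps_eq_connected_component[OF assms(3,5)] by simp
  finally show ?thesis .
qed

section \<open>The rank of the structure maps\<close>

lemma sum_fun_apply: "(\<Sum>a\<in>A. (g a :: 'x \<Rightarrow> 'y::comm_monoid_add)) x = (\<Sum>a\<in>A. g a x)"
  by (induction A rule: infinite_finite_induct) auto

definition fun_scale :: "'k::field \<Rightarrow> ('x \<Rightarrow> 'k) \<Rightarrow> 'x \<Rightarrow> 'k" where
  "fun_scale c w = (\<lambda>x. c * w x)"

interpretation fun_vs: vector_space "fun_scale :: 'k::field \<Rightarrow> ('x \<Rightarrow> 'k) \<Rightarrow> _"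
  by unfold_locales (auto simp: fun_scale_def algebra_simps)

lemma lincomb_eq_sum_scale: "(\<lambda>x. \<Sum>a\<in>G. g a * u a x) = (\<Sum>a\<in>G. fun_scale (g a) (u a))"
  by (rule ext) (simp add: sum_fun_apply fun_scale_def)

definition basis_vec :: "'x \<Rightarrow> 'x \<Rightarrow> 'k::field" where
  "basis_vec C = (\<lambda>C'. if C' = C then 1 else 0)"

lemma basis_vec_in_PHvec: "C \<in> comps f t0 t1 s \<Longrightarrow> basis_vec C \<in> PHvec f t0 t1 s"
  unfolding PHvec_def basis_vec_def by auto

lemma inj_basis_vec: "inj (basis_vec :: 'x \<Rightarrow> 'x \<Rightarrow> 'k::field)"
  by (rule injI) (auto simp: basis_vec_def fun_eq_iff split: if_splits)

lemma in_span_basis_vecs: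
  assumes "finite K" "{C. w C \<noteq> 0} \<subseteq> K"
  shows "w \<in> fun_vs.span (basis_vec ` K)"
proof -
  have "w = (\<Sum>C\<in>K. fun_scale (w C) (basis_vec C))"
  proof (rule ext)
    fix x
    have "(\<Sum>C\<in>K. fun_scale (w C) (basis_vec C)) x = (\<Sum>C\<in>K. if x = C then w C else 0)"
      by (auto simp: sum_fun_apply fun_scale_def basis_vec_def intro!: sum.cong)
    also have "\<dots> = w x" using assms by (auto simp: sum.delta)
    finally show "w x = (\<Sum>C\<in>K. fun_scale (w C) (basis_vec C)) x" by simp
  qed
  also have "\<dots> \<in> fun_vs.span (basis_vec ` K)"
    by (intro fun_vs.span_sum fun_vs.span_scale fun_vs.span_base) auto
  finally show ?thesis .
qed

lemma basis_vecs_independent: "\<not> fun_vs.dependent (basis_vec ` K :: ('x \<Rightarrow> 'k::field) set)"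
proof
  assume "fun_vs.dependent (basis_vec ` K :: ('x \<Rightarrow> 'k) set)"
  then obtain T u y0 where T: "finite T" "T \<subseteq> basis_vec ` K" "(\<Sum>x\<in>T. fun_scale (u x) x) = 0"
    and y0: "y0 \<in> T" "u y0 \<noteq> (0::'k)"
    unfolding fun_vs.dependent_explicit by blast
  obtain C0 where C0: "y0 = basis_vec C0" using y0 T(2) by auto
  have "0 = (\<Sum>x\<in>T. fun_scale (u x) x) C0" using T(3) by simp
  also have "\<dots> = (\<Sum>x\<in>T. if x = y0 then u x else 0)"
    unfolding sum_fun_apply fun_scale_def
  proof (rule sum.cong[OF refl])
    fix x assume "x \<in> T"
    then obtain C where C: "x = basis_vec C" using T(2) by auto
    show "u x * x C0 = (if x = y0 then u x else 0)"
    proof (cases "C = C0")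
      case False
      then have "x C0 = 0" using C by (simp add: basis_vec_def)
      moreover have "y0 C0 = 1" using C0 by (simp add: basis_vec_def)
      ultimately show ?thesis by auto
    qed (simp add: C C0 basis_vec_def)
  qed
  also have "\<dots> = u y0" using T(1) y0 by (simp add: sum.delta)
  finally show False using y0 by simp
qed

lemma support_lincomb_subset:
  "{x. (\<Sum>a\<in>G. g a * u a x) \<noteq> (0::'k::semiring_0)} \<subseteq> (\<Union>a\<in>G. {x. u a x \<noteq> 0})"
proof
  fix x assume "x \<in> {x. (\<Sum>a\<in>G. g a * u a x) \<noteq> 0}"
  then obtain a where "a \<in> G" "g a * u a x \<noteq> 0" by (auto elim: sum.not_neutral_contains_not_neutral)
  moreover from this(2) have "u a x \<noteq> 0" by auto
  ultimately show "x \<in> (\<Union>a\<in>G. {x. u a x \<noteq> 0})" by blast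
qed

lemma PHvec_lincomb:
  assumes "finite G" "\<And>a. a \<in> G \<Longrightarrow> u a \<in> PHvec f t0 t1 s"
  shows "(\<lambda>C. \<Sum>a\<in>G. g a * u a C) \<in> PHvec f t0 t1 s"
proof -
  note support_lincomb_subset[of g u G]
  moreover have "finite (\<Union>a\<in>G. {C. u a C \<noteq> 0})" "(\<Union>a\<in>G. {C. u a C \<noteq> 0}) \<subseteq> comps f t0 t1 s"
    using assms unfolding PHvec_def by auto
  ultimately show ?thesis unfolding PHvec_def by (auto intro: finite_subset)
qed

lemma PHmap_eq_sum_over:
  assumes "finite F" "{C. w C \<noteq> 0} \<subseteq> F"
  shows "PHmap f t0 t1 s t w =
    (\<lambda>C'. if C' \<in> comps f t0 t1 t then \<Sum>C\<in>{C\<in>F. C \<subseteq> C'}. w C else 0)"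
  unfolding PHmap_def
proof (intro ext if_cong refl)
  fix C'
  show "(\<Sum>C\<in>{C. w C \<noteq> 0 \<and> C \<subseteq> C'}. w C) = (\<Sum>C\<in>{C\<in>F. C \<subseteq> C'}. w C)"
    by (rule sum.mono_neutral_left) (use assms in auto)
qed

lemma PHmap_outside_comps: "C' \<notin> comps f t0 t1 t \<Longrightarrow> PHmap f t0 t1 s t w C' = 0"
  unfolding PHmap_def by simp

lemma PHmap_lincomb:
  assumes "finite G" "\<And>a. a \<in> G \<Longrightarrow> u a \<in> PHvec f t0 t1 s"
  shows "PHmap f t0 t1 s t (\<lambda>C. \<Sum>a\<in>G. g a * u a C) =
    (\<lambda>C'. \<Sum>a\<in>G. g a * PHmap f t0 t1 s t (u a) C')"
proof (rule ext)
  fix C'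
  define F where "F = (\<Union>a\<in>G. {C. u a C \<noteq> 0})"
  have F: "finite F" using assms unfolding PHvec_def F_def by auto
  have supp: "{C. (\<Sum>a\<in>G. g a * u a C) \<noteq> 0} \<subseteq> F"
    unfolding F_def by (rule support_lincomb_subset)
  have supp_a: "{C. u a C \<noteq> 0} \<subseteq> F" if "a \<in> G" for a unfolding F_def using that by auto
  show "PHmap f t0 t1 s t (\<lambda>C. \<Sum>a\<in>G. g a * u a C) C' = (\<Sum>a\<in>G. g a * PHmap f t0 t1 s t (u a) C')"
  proof (cases "C' \<in> comps f t0 t1 t")
    case True
    have "PHmap f t0 t1 s t (\<lambda>C. \<Sum>a\<in>G. g a * u a C) C' =
        (\<Sum>C\<in>{C\<in>F. C \<subseteq> C'}. \<Sum>a\<in>G. g a * u a C)"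
      unfolding PHmap_eq_sum_over[OF F supp] using True by simp
    also have "\<dots> = (\<Sum>a\<in>G. \<Sum>C\<in>{C\<in>F. C \<subseteq> C'}. g a * u a C)"
      by (rule sum.swap)
    also have "\<dots> = (\<Sum>a\<in>G. g a * PHmap f t0 t1 s t (u a) C')"
    proof (rule sum.cong[OF refl])
      fix a assume "a \<in> G"
      show "(\<Sum>C\<in>{C\<in>F. C \<subseteq> C'}. g a * u a C) = g a * PHmap f t0 t1 s t (u a) C'"
        unfolding PHmap_eq_sum_over[OF F supp_a[OF \<open>a \<in> G\<close>]] using True
        by (simp add: sum_distrib_left)
    qed
    finally show ?thesis .
  qed (simp add: PHmap_outside_comps)
qed

lemma PHmap_basis_vec:
  assumes "s \<le> t" "C \<in> comps f t0 t1 s" "C' \<in> comps f t0 t1 t" "C \<subseteq> C'"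
  shows "PHmap f t0 t1 s t (basis_vec C :: real set \<Rightarrow> 'k::field) = basis_vec C'"
proof (rule ext)
  fix C''
  show "PHmap f t0 t1 s t (basis_vec C) C'' = basis_vec C' C''"
  proof (cases "C'' \<in> comps f t0 t1 t")
    case True
    have iff: "C \<subseteq> C'' \<longleftrightarrow> C'' = C'"
    proof
      assume "C \<subseteq> C''"
      then obtain x where "x \<in> C" "x \<in> C''" using comps_subset_nonempty(2)[OF assms(2)] by auto
      then show "C'' = C'"
        using comps_eq_connected_component[OF True] comps_eq_connected_component[OF assms(3)] assms(4)
        by blast
    qed (use assms in auto)
    have "{X. basis_vec C X \<noteq> (0::'k) \<and> X \<subseteq> C''} = (if C'' = C' then {C} else {})"
      using iff by (auto simp: basis_vec_def)
    then show ?thesis using True iff unfolding PHmap_def by (simp add: basis_vec_def)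
  next
    case False
    then show ?thesis using assms(3) by (auto simp: PHmap_outside_comps basis_vec_def)
  qed
qed

definition comps_meeting :: "(real \<Rightarrow> real) \<Rightarrow> ereal \<Rightarrow> ereal \<Rightarrow> real \<Rightarrow> real \<Rightarrow> real set set" where
  "comps_meeting f t0 t1 s t = {C \<in> comps f t0 t1 t. \<exists>x\<in>C. f x \<le> s}"

definition bars_containing :: "('i \<Rightarrow> real set) \<Rightarrow> real \<Rightarrow> real \<Rightarrow> 'i set" where
  "bars_containing J s t = {a. s \<in> J a \<and> t \<in> J a}"

lemma PHmap_support_subset:
  assumes "w \<in> PHvec f t0 t1 s"
  shows "{C'. PHmap f t0 t1 s t w C' \<noteq> 0} \<subseteq> comps_meeting f t0 t1 s t"
proof
  fix C' assume "C' \<in> {C'. PHmap f t0 t1 s t w C' \<noteq> 0}"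
  then have C': "C' \<in> comps f t0 t1 t" and "(\<Sum>C\<in>{C. w C \<noteq> 0 \<and> C \<subseteq> C'}. w C) \<noteq> 0"
    unfolding PHmap_def by (auto split: if_splits)
  then obtain C where C: "w C \<noteq> 0" "C \<subseteq> C'"
    by (auto elim: sum.not_neutral_contains_not_neutral)
  have "C \<in> comps f t0 t1 s" using C(1) assms unfolding PHvec_def by auto
  then obtain x where "x \<in> C" "x \<in> sublevel f t0 t1 s"
    using comps_subset_nonempty[of C] by blast
  then show "C' \<in> comps_meeting f t0 t1 s t"
    unfolding comps_meeting_def sublevel_def using C' C(2) by auto
qed

lemma barcode_coeffs_eq:
  assumes B: "PH0_barcode f t0 t1 J (v :: 'i \<Rightarrow> real \<Rightarrow> real set \<Rightarrow> 'k::field)"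
    and G: "finite G" "G \<subseteq> {a. t \<in> J a}"
    and eq: "(\<lambda>C. \<Sum>a\<in>G. g a * v a t C) = (\<lambda>C. \<Sum>a\<in>G. g' a * v a t C)"
    and "a \<in> G"
  shows "g a = g' a"
proof -
  define w where "w = (\<lambda>C. \<Sum>a\<in>G. g a * v a t C)"
  define P where "P = (\<lambda>h::'i \<Rightarrow> 'k. (\<forall>a. h a \<noteq> 0 \<longrightarrow> t \<in> J a) \<and> finite {a. h a \<noteq> 0} \<and>
      w = (\<lambda>C. \<Sum>a\<in>{a. h a \<noteq> 0}. h a * v a t C))"
  have "w \<in> PHvec f t0 t1 t"
    unfolding w_def by (rule PHvec_lincomb) (use B G in \<open>auto simp: PH0_barcode_def\<close>)
  then have unique: "\<exists>!h. P h"
    using B unfolding PH0_barcode_def P_def by blast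
  have restrict: "P (\<lambda>x. if x \<in> G then h x else 0)" if "w = (\<lambda>C. \<Sum>a\<in>G. h a * v a t C)" for h
  proof -
    have "(\<Sum>a\<in>{a. (if a \<in> G then h a else 0) \<noteq> 0}. (if a \<in> G then h a else 0) * v a t C)
        = (\<Sum>a\<in>G. (if a \<in> G then h a else 0) * v a t C)" for C
      by (rule sum.mono_neutral_left) (use G(1) in auto)
    moreover have "finite {a. (if a \<in> G then h a else 0) \<noteq> 0}"
      by (rule finite_subset[OF _ G(1)]) auto
    ultimately show ?thesis using that G(2) unfolding P_def by auto
  qed
  have "(\<lambda>x. if x \<in> G then g x else 0) = (\<lambda>x. if x \<in> G then g' x else 0)"
    using unique restrict[of g] restrict[of g'] eq unfolding w_def by blast
  then show ?thesis using \<open>a \<in> G\<close> by (metis (mono_tags))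
qed

lemma barcode_vecs_independent:
  assumes B: "PH0_barcode f t0 t1 J (v :: 'i \<Rightarrow> real \<Rightarrow> real set \<Rightarrow> 'k::field)"
  shows "inj_on (\<lambda>a. v a t) {a. t \<in> J a}"
    and "\<not> fun_vs.dependent ((\<lambda>a. v a t) ` {a. t \<in> J a})"
proof -
  show inj: "inj_on (\<lambda>a. v a t) {a. t \<in> J a}"
  proof (rule inj_onI, rule ccontr)
    fix a a' assume a: "a \<in> {a. t \<in> J a}" "a' \<in> {a. t \<in> J a}" "v a t = v a' t" "a \<noteq> a'"
    let ?g = "\<lambda>x. if x = a then 1 else 0 :: 'k" and ?g' = "\<lambda>x. if x = a' then 1 else 0 :: 'k"
    have "(\<lambda>C. \<Sum>x\<in>{a,a'}. ?g x * v x t C) = (\<lambda>C. \<Sum>x\<in>{a,a'}. ?g' x * v x t C)"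
      using a by (auto simp: fun_eq_iff)
    from barcode_coeffs_eq[OF B _ _ this, of a] a show False by auto
  qed
  show "\<not> fun_vs.dependent ((\<lambda>a. v a t) ` {a. t \<in> J a})"
  proof
    assume "fun_vs.dependent ((\<lambda>a. v a t) ` {a. t \<in> J a})"
    then obtain T u where T: "finite T" "T \<subseteq> (\<lambda>a. v a t) ` {a. t \<in> J a}"
        "(\<Sum>x\<in>T. fun_scale (u x) x) = 0" "\<exists>x\<in>T. u x \<noteq> 0"
      unfolding fun_vs.dependent_explicit by blast
    define G where "G = {a. t \<in> J a \<and> v a t \<in> T}"
    have TG: "T = (\<lambda>a. v a t) ` G" using T(2) unfolding G_def by auto
    have injG: "inj_on (\<lambda>a. v a t) G" by (rule inj_on_subset[OF inj]) (auto simp: G_def)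
    have G: "finite G" "G \<subseteq> {a. t \<in> J a}"
      using finite_imageD[OF _ injG] T(1) TG unfolding G_def by auto
    have "(\<lambda>C. \<Sum>a\<in>G. u (v a t) * v a t C) = (\<Sum>x\<in>T. fun_scale (u x) x)"
      unfolding TG lincomb_eq_sum_scale sum.reindex[OF injG] by (simp add: comp_def)
    also have "\<dots> = (\<lambda>C. \<Sum>a\<in>G. 0 * v a t C)" using T(3) by (simp add: fun_eq_iff)
    finally have "u (v a t) = 0" if "a \<in> G" for a
      using barcode_coeffs_eq[OF B G _ that, of "\<lambda>a. u (v a t)" "\<lambda>_. 0"] by simp
    then show False using T(4) TG by auto
  qed
qed

lemma barcode_vec_in_span_meeting:
  assumes B: "PH0_barcode f t0 t1 J (v :: 'i \<Rightarrow> real \<Rightarrow> real set \<Rightarrow> 'k::field)"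
    and "s \<le> t" "finite (comps_meeting f t0 t1 s t)" "a \<in> bars_containing J s t"
  shows "v a t \<in> fun_vs.span (basis_vec ` comps_meeting f t0 t1 s t)"
proof -
  have "v a t = PHmap f t0 t1 s t (v a s)" "v a s \<in> PHvec f t0 t1 s"
    using B assms(2,4) unfolding PH0_barcode_def bars_containing_def by auto
  then show ?thesis using in_span_basis_vecs[OF assms(3) PHmap_support_subset] by simp
qed

lemma PHmap_barcode_vec_in_span:
  assumes B: "PH0_barcode f t0 t1 J (v :: 'i \<Rightarrow> real \<Rightarrow> real set \<Rightarrow> 'k::field)"
    and "s \<le> t" "s \<in> J a"
  shows "PHmap f t0 t1 s t (v a s) \<in> fun_vs.span ((\<lambda>a. v a t) ` bars_containing J s t)"
proof -
  have vmap: "PHmap f t0 t1 s t (v a s) = (if t \<in> J a then v a t else 0)"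
    using B assms(2,3) unfolding PH0_barcode_def by (simp add: func_zero)
  show ?thesis
  proof (cases "t \<in> J a")
    case True
    then have "a \<in> bars_containing J s t" using assms(3) by (simp add: bars_containing_def)
    then show ?thesis using vmap True by (simp add: fun_vs.span_base)
  qed (use vmap fun_vs.span_zero in simp)
qed

lemma basis_vec_in_span_barcode_vecs:
  assumes B: "PH0_barcode f t0 t1 J (v :: 'i \<Rightarrow> real \<Rightarrow> real set \<Rightarrow> 'k::field)"
    and st: "s \<le> t" and C': "C' \<in> comps_meeting f t0 t1 s t"
  shows "basis_vec C' \<in> fun_vs.span ((\<lambda>a. v a t) ` bars_containing J s t)"
proof -
  obtain x where x: "x \<in> C'" "f x \<le> s" and C'c: "C' \<in> comps f t0 t1 t"
    using C' unfolding comps_meeting_def by auto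
  have xs: "x \<in> sublevel f t0 t1 s"
    using x comps_subset_nonempty(1)[OF C'c] unfolding sublevel_def by auto
  define C where "C = connected_component_set (sublevel f t0 t1 s) x"
  have C: "C \<in> comps f t0 t1 s" "C \<subseteq> C'"
    using comps_subset_of_meet[OF st _ C'c _ x(1)] connected_component_in_comps[OF xs] xs
    unfolding C_def by auto
  obtain g where g: "\<forall>a. g a \<noteq> 0 \<longrightarrow> s \<in> J a" "finite {a. g a \<noteq> 0}"
      "basis_vec C = (\<lambda>C. \<Sum>a\<in>{a. g a \<noteq> 0}. g a * v a s C)"
    using B basis_vec_in_PHvec[OF C(1)] unfolding PH0_barcode_def by blast
  have "basis_vec C' = PHmap f t0 t1 s t (basis_vec C)"
    by (simp add: PHmap_basis_vec[OF st C(1) C'c C(2)])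
  also have "\<dots> = (\<lambda>C'. \<Sum>a\<in>{a. g a \<noteq> 0}. g a * PHmap f t0 t1 s t (v a s) C')"
    unfolding g(3) by (rule PHmap_lincomb) (use g B in \<open>auto simp: PH0_barcode_def\<close>)
  also have "\<dots> = (\<Sum>a\<in>{a. g a \<noteq> 0}. fun_scale (g a) (PHmap f t0 t1 s t (v a s)))"
    by (rule lincomb_eq_sum_scale)
  also have "\<dots> \<in> fun_vs.span ((\<lambda>a. v a t) ` bars_containing J s t)"
    using g(1) PHmap_barcode_vec_in_span[OF B st]
    by (intro fun_vs.span_sum fun_vs.span_scale) auto
  finally show ?thesis .
qed

text \<open>Both cardinalities are the rank of the structure map from level s to level t: the vectors
  v a t of the bars through s and t, and the basis vectors of the components of X_t meeting X_s,
  are two bases of its image.\<close>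
lemma card_bars_containing:
  assumes B: "PH0_barcode f t0 t1 J (v :: 'i \<Rightarrow> real \<Rightarrow> real set \<Rightarrow> 'k::field)"
    and st: "s \<le> t" and fin: "finite (comps_meeting f t0 t1 s t)"
  shows "finite (bars_containing J s t) \<and>
    card (bars_containing J s t) = card (comps_meeting f t0 t1 s t)"
proof -
  let ?V = "(\<lambda>a. v a t) ` bars_containing J s t"
  let ?E = "basis_vec ` comps_meeting f t0 t1 s t :: (real set \<Rightarrow> 'k) set"
  have sub: "bars_containing J s t \<subseteq> {a. t \<in> J a}" unfolding bars_containing_def by auto
  have inj: "inj_on (\<lambda>a. v a t) (bars_containing J s t)"
    using inj_on_subset[OF barcode_vecs_independent(1)[OF B] sub] .
  have indV: "\<not> fun_vs.dependent ?V"
    using fun_vs.independent_mono[OF barcode_vecs_independent(2)[OF B] image_mono[OF sub]] .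
  have "?V \<subseteq> fun_vs.span ?E"
    using barcode_vec_in_span_meeting[OF B st fin] by auto
  then have finV: "finite ?V" and le: "card ?V \<le> card ?E"
    using fun_vs.independent_span_bound[OF finite_imageI[OF fin] indV] by auto
  have "?E \<subseteq> fun_vs.span ?V"
    using basis_vec_in_span_barcode_vecs[OF B st] by auto
  then have ge: "card ?E \<le> card ?V"
    using fun_vs.independent_span_bound[OF finV basis_vecs_independent] by auto
  have "card ?V = card (bars_containing J s t)" by (rule card_image[OF inj])
  moreover have "card ?E = card (comps_meeting f t0 t1 s t)"
    by (rule card_image[OF inj_on_subset[OF inj_basis_vec subset_UNIV]])
  moreover have "finite (bars_containing J s t)" by (rule finite_imageD[OF finV inj])
  ultimately show ?thesis using le ge by linarith
qed

lemma mem_Ioo_ereal: "x \<in> Ioo_ereal t0 t1 \<longleftrightarrow> t0 < ereal x \<and> ereal x < t1"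
  unfolding Ioo_ereal_def by simp

lemma Icc_subset_Ioo_ereal:
  assumes "x \<in> Ioo_ereal t0 t1" "y \<in> Ioo_ereal t0 t1"
  shows "{x..y} \<subseteq> Ioo_ereal t0 t1"
proof
  fix z assume "z \<in> {x..y}"
  then have "t0 < ereal x" "ereal x \<le> ereal z" "ereal z \<le> ereal y" "ereal y < t1"
    using assms by (auto simp: mem_Ioo_ereal)
  then show "z \<in> Ioo_ereal t0 t1" unfolding mem_Ioo_ereal by (meson less_le_trans le_less_trans)
qed

lemma continuous_on_Icc_in_Ioo_ereal:
  "continuous_on (Ioo_ereal t0 t1) f \<Longrightarrow> x \<in> Ioo_ereal t0 t1 \<Longrightarrow> y \<in> Ioo_ereal t0 t1 \<Longrightarrow>
    continuous_on {x..y} f"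
  by (rule continuous_on_subset[OF _ Icc_subset_Ioo_ereal])

lemma compact_Icc_preimage:
  fixes f :: "real \<Rightarrow> real"
  assumes "continuous_on {lo..hi} f" "closed T"
  shows "compact ({lo..hi} \<inter> f -` T)"
proof -
  have "closed ({lo..hi} \<inter> f -` T)"
    by (rule continuous_closed_preimage[OF assms(1) closed_atLeastAtMost assms(2)])
  from compact_Int_closed[OF compact_Icc[of lo hi] this] show ?thesis by (simp add: Int_absorb1)
qed

lemma least_in_closed_preimage:
  fixes f :: "real \<Rightarrow> real"
  assumes "continuous_on {lo..hi} f" "closed T" "x0 \<in> {lo..hi}" "f x0 \<in> T"
  obtains m where "m \<in> {lo..hi}" "f m \<in> T" "\<And>t. t \<in> {lo..hi} \<Longrightarrow> f t \<in> T \<Longrightarrow> m \<le> t"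
  using compact_attains_inf[OF compact_Icc_preimage[OF assms(1,2)]] assms(3,4) by blast

lemma greatest_in_closed_preimage:
  fixes f :: "real \<Rightarrow> real"
  assumes "continuous_on {lo..hi} f" "closed T" "x0 \<in> {lo..hi}" "f x0 \<in> T"
  obtains m where "m \<in> {lo..hi}" "f m \<in> T" "\<And>t. t \<in> {lo..hi} \<Longrightarrow> f t \<in> T \<Longrightarrow> t \<le> m"
  using compact_attains_sup[OF compact_Icc_preimage[OF assms(1,2)]] assms(3,4) by blast

lemma below_near_left_end:
  fixes f :: "real \<Rightarrow> real"
  assumes "t0 < t1" "Limsup (left_end_filter t0) (\<lambda>t. ereal (f t)) < ereal b"
  obtains p where "p \<in> Ioo_ereal t0 t1" "\<And>x. x \<in> Ioo_ereal t0 t1 \<Longrightarrow> x \<le> p \<Longrightarrow> f x < b"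
proof -
  have ev: "eventually (\<lambda>x. ereal (f x) < ereal b) (left_end_filter t0)"
    by (rule Limsup_lessD[OF assms(2)])
  show ?thesis
  proof (cases "t0 = -\<infinity>")
    case True
    then have "eventually (\<lambda>x. f x < b) at_bot" using ev by (simp add: left_end_filter_def)
    then obtain N where N: "\<And>x. x \<le> N \<Longrightarrow> f x < b" by (auto simp: eventually_at_bot_linorder)
    obtain z where z: "ereal z < t1" using ereal_dense2[OF assms(1)] by auto
    obtain M where M: "M \<le> z" "M \<le> N" by (meson min.cobounded1 min.cobounded2)
    have "ereal M < t1" using z M(1) by (meson ereal_less_eq(3) le_less_trans)
    then have "M \<in> Ioo_ereal t0 t1" using True by (simp add: mem_Ioo_ereal)
    then show ?thesis using N M(2) by (intro that[of M]) auto
  next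
    case False
    then obtain a where a: "t0 = ereal a" using assms(1) by (cases t0) auto
    then have "eventually (\<lambda>x. f x < b) (at_right a)" using ev False by (simp add: left_end_filter_def)
    then obtain e where e: "e > a" "\<And>y. a < y \<Longrightarrow> y < e \<Longrightarrow> f y < b"
      unfolding eventually_at_right_field by auto
    have "t0 < min (ereal e) t1" using a e(1) assms(1) by auto
    then obtain z where z: "t0 < ereal z" "ereal z < min (ereal e) t1" using ereal_dense2 by blast
    then show ?thesis using e a by (intro that[of z]) (auto simp: mem_Ioo_ereal)
  qed
qed

lemma above_near_right_end:
  fixes f :: "real \<Rightarrow> real"
  assumes "t0 < t1" "ereal d < Liminf (right_end_filter t1) (\<lambda>t. ereal (f t))"
  obtains q where "q \<in> Ioo_ereal t0 t1" "\<And>x. x \<in> Ioo_ereal t0 t1 \<Longrightarrow> q \<le> x \<Longrightarrow> d < f x"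
proof -
  have ev: "eventually (\<lambda>x. ereal d < ereal (f x)) (right_end_filter t1)"
    by (rule less_LiminfD[OF assms(2)])
  show ?thesis
  proof (cases "t1 = \<infinity>")
    case True
    then have "eventually (\<lambda>x. d < f x) at_top" using ev by (simp add: right_end_filter_def)
    then obtain N where N: "\<And>x. N \<le> x \<Longrightarrow> d < f x" by (auto simp: eventually_at_top_linorder)
    obtain z where z: "t0 < ereal z" using ereal_dense2[OF assms(1)] by auto
    obtain M where M: "z \<le> M" "N \<le> M" by (meson max.cobounded1 max.cobounded2)
    have "t0 < ereal M" using z M(1) by (meson ereal_less_eq(3) less_le_trans)
    then have "M \<in> Ioo_ereal t0 t1" using True by (simp add: mem_Ioo_ereal)
    then show ?thesis using N M(2) by (intro that[of M]) auto
  next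
    case False
    then obtain a where a: "t1 = ereal a" using assms(1) by (cases t1) auto
    then have "eventually (\<lambda>x. d < f x) (at_left a)" using ev False by (simp add: right_end_filter_def)
    then obtain e where e: "e < a" "\<And>y. e < y \<Longrightarrow> y < a \<Longrightarrow> d < f y"
      unfolding eventually_at_left_field by auto
    have "max (ereal e) t0 < t1" using a e(1) assms(1) by auto
    then obtain z where z: "max (ereal e) t0 < ereal z" "ereal z < t1" using ereal_dense2 by blast
    then show ?thesis using e a by (intro that[of z]) (auto simp: mem_Ioo_ereal)
  qed
qed

lemma first_hit_at_end: "first_hit f t0 t1 c t1 = t1"
  unfolding first_hit_def Let_def Ioo_ereal_def by auto

lemma Inf_ereal_image_eq_least:
  "m \<in> S \<Longrightarrow> (\<And>t. t \<in> S \<Longrightarrow> m \<le> t) \<Longrightarrow> Inf (ereal ` S) = ereal m"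
  by (rule antisym) (auto intro: Inf_lower Inf_greatest)

text \<open>A search starting at t0 may instead start at the guard p.\<close>
lemma first_hit_start_point:
  fixes f :: "real \<Rightarrow> real"
  assumes p: "p \<in> Ioo_ereal t0 t1" "\<And>x. x \<in> Ioo_ereal t0 t1 \<Longrightarrow> x \<le> p \<Longrightarrow> f x < c"
    and \<tau>: "\<tau> = t0 \<or> (\<exists>r\<in>Ioo_ereal t0 t1. \<tau> = ereal r \<and> f r \<noteq> c)"
  obtains lo where "lo \<in> Ioo_ereal t0 t1" "f lo \<noteq> c" "\<tau> \<le> ereal lo"
    "\<forall>t\<in>Ioo_ereal t0 t1. \<tau> < ereal t \<and> f t = c \<longrightarrow> lo < t"
proof (cases "\<tau> = t0")
  case True
  have "\<forall>t\<in>Ioo_ereal t0 t1. f t = c \<longrightarrow> p < t" using p(2) by (auto simp: not_le[symmetric])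
  then show ?thesis using that[of p] True p by (auto simp: mem_Ioo_ereal less_imp_le)
next
  case False
  then obtain r where "r \<in> Ioo_ereal t0 t1" "\<tau> = ereal r" "f r \<noteq> c" using \<tau> by auto
  then show ?thesis using that[of r] by auto
qed

lemma first_hit_cases:
  fixes f :: "real \<Rightarrow> real"
  assumes cont: "continuous_on (Ioo_ereal t0 t1) f"
    and p: "p \<in> Ioo_ereal t0 t1" "\<And>x. x \<in> Ioo_ereal t0 t1 \<Longrightarrow> x \<le> p \<Longrightarrow> f x < c"
    and \<tau>: "\<tau> = t0 \<or> (\<exists>r\<in>Ioo_ereal t0 t1. \<tau> = ereal r \<and> f r \<noteq> c)"
  shows "(first_hit f t0 t1 c \<tau> = t1 \<and> (\<forall>t\<in>Ioo_ereal t0 t1. \<tau> < ereal t \<longrightarrow> f t \<noteq> c)) \<or>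
    (\<exists>m\<in>Ioo_ereal t0 t1. first_hit f t0 t1 c \<tau> = ereal m \<and> \<tau> < ereal m \<and> f m = c \<and>
      (\<forall>t\<in>Ioo_ereal t0 t1. \<tau> < ereal t \<and> t < m \<longrightarrow> f t \<noteq> c))"
proof -
  define S where "S = {t \<in> Ioo_ereal t0 t1. \<tau> < ereal t \<and> f t = c}"
  have fh: "first_hit f t0 t1 c \<tau> = (if S = {} then t1 else Inf (ereal ` S))"
    unfolding first_hit_def S_def Let_def by simp
  show ?thesis
  proof (cases "S = {}")
    case True
    then show ?thesis using fh unfolding S_def by auto
  next
    case False
    then obtain s0 where s0: "s0 \<in> Ioo_ereal t0 t1" "f s0 = c" "\<tau> < ereal s0" unfolding S_def by auto
    obtain lo where lo: "lo \<in> Ioo_ereal t0 t1" "f lo \<noteq> c" "\<tau> \<le> ereal lo"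
        "\<forall>t\<in>Ioo_ereal t0 t1. \<tau> < ereal t \<and> f t = c \<longrightarrow> lo < t"
      by (rule first_hit_start_point[OF p \<tau>])
    have "lo < s0" using lo(4) s0 by blast
    obtain m where m: "m \<in> {lo..s0}" "f m = c" "\<And>t. t \<in> {lo..s0} \<Longrightarrow> f t = c \<Longrightarrow> m \<le> t"
      using least_in_closed_preimage[OF continuous_on_Icc_in_Ioo_ereal[OF cont lo(1) s0(1)]
          closed_singleton, of s0 c] s0 \<open>lo < s0\<close> by auto
    have "lo < m" using m lo(2) by (cases "m = lo") auto
    have mI: "m \<in> Ioo_ereal t0 t1" using Icc_subset_Ioo_ereal[OF lo(1) s0(1)] m(1) by auto
    have "\<tau> < ereal m" using lo(3) \<open>lo < m\<close> by (simp add: le_less_trans)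
    then have mS: "m \<in> S" unfolding S_def using mI m(2) by auto
    have mmin: "\<forall>t\<in>S. m \<le> t"
    proof
      fix t assume "t \<in> S"
      then have "lo < t" "t \<in> Ioo_ereal t0 t1" "f t = c" using lo(4) unfolding S_def by auto
      then show "m \<le> t" using m(1) m(3)[of t] by (cases "t \<le> s0") auto
    qed
    have "Inf (ereal ` S) = ereal m" using Inf_ereal_image_eq_least[OF mS] mmin by blast
    then have "first_hit f t0 t1 c \<tau> = ereal m" using fh False by simp
    moreover have "\<forall>t\<in>Ioo_ereal t0 t1. \<tau> < ereal t \<and> t < m \<longrightarrow> f t \<noteq> c"
      using mmin unfolding S_def by force
    ultimately show ?thesis using mI \<open>\<tau> < ereal m\<close> m(2) by blast
  qed
qed

section \<open>Connectivity in sublevel sets\<close>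

lemma connected_component_sublevelI:
  assumes "u \<le> w" "u \<in> Ioo_ereal t0 t1" "w \<in> Ioo_ereal t0 t1" "\<And>y. u \<le> y \<Longrightarrow> y \<le> w \<Longrightarrow> f y \<le> t"
  shows "connected_component (sublevel f t0 t1 t) u w"
proof (rule connected_componentI[OF connected_Icc])
  show "{u..w} \<subseteq> sublevel f t0 t1 t"
    using Icc_subset_Ioo_ereal[OF assms(2,3)] assms(4) unfolding sublevel_def by auto
qed (use assms(1) in auto)

lemma not_connected_component_sublevel:
  assumes "u < z" "z < w" "t < f z"
  shows "\<not> connected_component (sublevel f t0 t1 t) u w"
proof
  assume "connected_component (sublevel f t0 t1 t) u w"
  then obtain T where T: "connected T" "T \<subseteq> sublevel f t0 t1 t" "u \<in> T" "w \<in> T"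
    unfolding connected_component_def by blast
  then have "z \<in> T" using assms(1,2) is_interval_connected_1 unfolding is_interval_1
    by (meson less_imp_le)
  then show False using T(2) assms(3) unfolding sublevel_def by auto
qed

text \<open>On a stretch climbing from below s to level d, every point of X_s is joined to the
  start within X_t once t is close enough to d: beyond the last point of X_s on the stretch f
  stays at least s, and before it f is bounded away from d by compactness.\<close>
lemma eventually_connected_ascent:
  fixes f :: "real \<Rightarrow> real"
  assumes cont: "continuous_on (Ioo_ereal t0 t1) f"
    and uw: "u \<in> Ioo_ereal t0 t1" "w \<in> Ioo_ereal t0 t1"
    and "s < f w" and below: "\<And>y. u \<le> y \<Longrightarrow> y < w \<Longrightarrow> f y < d"
  shows "\<forall>\<^sub>F t in at_left d. \<forall>x\<in>{u..w}. f x \<le> s \<longrightarrow> connected_component (sublevel f t0 t1 t) u x"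
proof (cases "\<exists>x\<in>{u..w}. f x \<le> s")
  case False
  then show ?thesis by auto
next
  case True
  then obtain x1 where x1: "x1 \<in> {u..w}" "f x1 \<in> {..s}" by auto
  obtain x' where x': "x' \<in> {u..w}" "f x' \<le> s" "\<And>y. y \<in> {u..w} \<Longrightarrow> f y \<in> {..s} \<Longrightarrow> y \<le> x'"
    using greatest_in_closed_preimage[OF continuous_on_Icc_in_Ioo_ereal[OF cont uw] closed_atMost x1]
    by auto
  have "x' < w" using x' \<open>s < f w\<close> by (cases "x' = w") auto
  have x'I: "x' \<in> Ioo_ereal t0 t1" using Icc_subset_Ioo_ereal[OF uw] x'(1) by auto
  obtain y0 where y0: "y0 \<in> {u..x'}" "\<And>y. y \<in> {u..x'} \<Longrightarrow> f y \<le> f y0"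
    using continuous_attains_sup[OF compact_Icc _ continuous_on_Icc_in_Ioo_ereal[OF cont uw(1) x'I]]
      x'(1) by fastforce
  have "f y0 < d" using below y0(1) \<open>x' < w\<close> by auto
  then have "\<forall>\<^sub>F t in at_left d. f y0 < t"
    by (rule eventually_mono[OF eventually_at_left_real]) auto
  then show ?thesis
  proof (rule eventually_mono, intro ballI impI)
    fix t x assume t: "f y0 < t" and x: "x \<in> {u..w}" "f x \<le> s"
    have "x \<le> x'" using x x'(3) by auto
    then have "f y \<le> t" if "u \<le> y" "y \<le> x" for y using y0(2)[of y] that t by auto
    then show "connected_component (sublevel f t0 t1 t) u x"
      using x Icc_subset_Ioo_ereal[OF uw] by (intro connected_component_sublevelI) auto
  qed
qed

lemma eventually_connected_descent:
  fixes f :: "real \<Rightarrow> real"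
  assumes cont: "continuous_on (Ioo_ereal t0 t1) f"
    and uw: "u \<in> Ioo_ereal t0 t1" "w \<in> Ioo_ereal t0 t1"
    and "s < f u" and below: "\<And>y. u < y \<Longrightarrow> y \<le> w \<Longrightarrow> f y < d"
  shows "\<forall>\<^sub>F t in at_left d. \<forall>x\<in>{u..w}. f x \<le> s \<longrightarrow> connected_component (sublevel f t0 t1 t) x w"
proof (cases "\<exists>x\<in>{u..w}. f x \<le> s")
  case False
  then show ?thesis by auto
next
  case True
  then obtain x1 where x1: "x1 \<in> {u..w}" "f x1 \<in> {..s}" by auto
  obtain x' where x': "x' \<in> {u..w}" "f x' \<le> s" "\<And>y. y \<in> {u..w} \<Longrightarrow> f y \<in> {..s} \<Longrightarrow> x' \<le> y"
    using least_in_closed_preimage[OF continuous_on_Icc_in_Ioo_ereal[OF cont uw] closed_atMost x1]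
    by auto
  have "u < x'" using x' \<open>s < f u\<close> by (cases "x' = u") auto
  have x'I: "x' \<in> Ioo_ereal t0 t1" using Icc_subset_Ioo_ereal[OF uw] x'(1) by auto
  obtain y0 where y0: "y0 \<in> {x'..w}" "\<And>y. y \<in> {x'..w} \<Longrightarrow> f y \<le> f y0"
    using continuous_attains_sup[OF compact_Icc _ continuous_on_Icc_in_Ioo_ereal[OF cont x'I uw(2)]]
      x'(1) by fastforce
  have "f y0 < d" using below y0(1) \<open>u < x'\<close> by auto
  then have "\<forall>\<^sub>F t in at_left d. f y0 < t"
    by (rule eventually_mono[OF eventually_at_left_real]) auto
  then show ?thesis
  proof (rule eventually_mono, intro ballI impI)
    fix t x assume t: "f y0 < t" and x: "x \<in> {u..w}" "f x \<le> s"
    have "x' \<le> x" using x x'(3) by auto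
    then have "f y \<le> t" if "x \<le> y" "y \<le> w" for y using y0(2)[of y] that t by auto
    then show "connected_component (sublevel f t0 t1 t) x w"
      using x Icc_subset_Ioo_ereal[OF uw] by (intro connected_component_sublevelI) auto
  qed
qed

text \<open>The pattern cut out by the windings: low k stands for t_k^b, except that low 0 is a point of I
  left of all crossings rather than t_0, and high k stands for t_(k+1)^d.\<close>
locale zigzag =
  fixes f :: "real \<Rightarrow> real" and t0 t1 :: ereal and b d q :: real
    and n :: nat and low high :: "nat \<Rightarrow> real"
  assumes cont: "continuous_on (Ioo_ereal t0 t1) f" and b_less_d: "b < d"
    and low_in: "k \<le> n \<Longrightarrow> low k \<in> Ioo_ereal t0 t1"
    and f_low: "k \<le> n \<Longrightarrow> f (low k) \<le> b"
    and high_in: "k \<le> n \<Longrightarrow> high k \<in> Ioo_ereal t0 t1"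
    and f_high: "k \<le> n \<Longrightarrow> f (high k) = d"
    and low_less_high: "k \<le> n \<Longrightarrow> low k < high k"
    and high_less_low: "k < n \<Longrightarrow> high k < low (Suc k)"
    and below_d: "k \<le> n \<Longrightarrow> low k \<le> x \<Longrightarrow> x < high k \<Longrightarrow> f x < d"
    and above_b: "k < n \<Longrightarrow> high k < x \<Longrightarrow> x < low (Suc k) \<Longrightarrow> b < f x"
    and above_b_after: "x \<in> Ioo_ereal t0 t1 \<Longrightarrow> high n < x \<Longrightarrow> b < f x"
    and below_b_before: "x \<in> Ioo_ereal t0 t1 \<Longrightarrow> x \<le> low 0 \<Longrightarrow> f x \<le> b"
    and q_in: "q \<in> Ioo_ereal t0 t1"
    and above_d_after: "x \<in> Ioo_ereal t0 t1 \<Longrightarrow> q \<le> x \<Longrightarrow> d < f x"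
begin

lemma continuous_on_Icc: "x \<in> Ioo_ereal t0 t1 \<Longrightarrow> y \<in> Ioo_ereal t0 t1 \<Longrightarrow> continuous_on {x..y} f"
  by (rule continuous_on_Icc_in_Ioo_ereal[OF cont])

lemma low_mono: "i \<le> k \<Longrightarrow> k \<le> n \<Longrightarrow> low i \<le> low k"
proof (induction k)
  case (Suc k)
  show ?case
  proof (cases "i = Suc k")
    case False
    then have "low i \<le> low k" using Suc by simp
    also have "\<dots> \<le> low (Suc k)"
      using low_less_high[of k] high_less_low[of k] Suc.prems(2) by simp
    finally show ?thesis .
  qed simp
qed simp

lemma tail_lower_bound:
  obtains m where "b < m" "\<And>x. x \<in> Ioo_ereal t0 t1 \<Longrightarrow> high n \<le> x \<Longrightarrow> m \<le> f x"
proof -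
  have hn: "high n \<in> Ioo_ereal t0 t1" "f (high n) = d" using high_in f_high by auto
  have "high n < q" using above_d_after[OF hn(1)] hn(2) by force
  then obtain x0 where x0: "x0 \<in> {high n..q}" "\<And>y. y \<in> {high n..q} \<Longrightarrow> f x0 \<le> f y"
    using continuous_attains_inf[OF compact_Icc _ continuous_on_Icc[OF hn(1) q_in]] by fastforce
  have "b < f x0"
    using above_b_after Icc_subset_Ioo_ereal[OF hn(1) q_in] x0(1) hn(2) b_less_d
    by (cases "x0 = high n") auto
  moreover have "min (f x0) d \<le> f x" if "x \<in> Ioo_ereal t0 t1" "high n \<le> x" for x
    using x0(2)[of x] above_d_after[OF that(1)] that(2) by (cases "x \<le> q") auto
  ultimately show ?thesis using b_less_d by (intro that[of "min (f x0) d"]) auto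
qed

lemma descent_start:
  assumes "k < n"
  obtains e m where "high k \<le> e" "e < low (Suc k)" "b < m"
    "\<And>y. high k \<le> y \<Longrightarrow> y \<le> e \<Longrightarrow> m \<le> f y" "\<And>y. e < y \<Longrightarrow> y \<le> low (Suc k) \<Longrightarrow> f y < d"
proof -
  have hk: "high k \<in> Ioo_ereal t0 t1" "f (high k) = d" using assms high_in f_high by auto
  have lk: "low (Suc k) \<in> Ioo_ereal t0 t1" "f (low (Suc k)) \<le> b" using assms low_in f_low by auto
  have hl: "high k < low (Suc k)" using high_less_low[OF assms] .
  obtain e where e: "e \<in> {high k..low (Suc k)}" "f e \<in> {d..}"
    "\<And>y. y \<in> {high k..low (Suc k)} \<Longrightarrow> f y \<in> {d..} \<Longrightarrow> y \<le> e"
    using greatest_in_closed_preimage[OF continuous_on_Icc[OF hk(1) lk(1)] closed_atLeast, of "high k"]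
      hk hl by auto
  have "e < low (Suc k)" using e(1,2) lk(2) b_less_d by (cases "e = low (Suc k)") auto
  have eI: "e \<in> Ioo_ereal t0 t1" using Icc_subset_Ioo_ereal[OF hk(1) lk(1)] e(1) by auto
  obtain x0 where x0: "x0 \<in> {high k..e}" "\<And>y. y \<in> {high k..e} \<Longrightarrow> f x0 \<le> f y"
    using continuous_attains_inf[OF compact_Icc _ continuous_on_Icc[OF hk(1) eI]] e(1) by fastforce
  have "b < f x0"
    using above_b[OF assms, of x0] x0(1) \<open>e < low (Suc k)\<close> hk(2) b_less_d
    by (cases "x0 = high k") auto
  moreover have "f y < d" if "e < y" "y \<le> low (Suc k)" for y
    using e(3)[of y] e(1) that by force
  ultimately show ?thesis using that[of e "f x0"] e(1) x0(2) \<open>e < low (Suc k)\<close> by auto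
qed

lemma descent_starts:
  obtains e m where "\<And>k. k < n \<Longrightarrow> high k \<le> e k \<and> e k < low (Suc k) \<and> b < m k \<and>
    (\<forall>y. high k \<le> y \<and> y \<le> e k \<longrightarrow> m k \<le> f y) \<and> (\<forall>y. e k < y \<and> y \<le> low (Suc k) \<longrightarrow> f y < d)"
proof -
  have "\<exists>e m. k < n \<longrightarrow> high k \<le> e \<and> e < low (Suc k) \<and> b < m \<and>
      (\<forall>y. high k \<le> y \<and> y \<le> e \<longrightarrow> m \<le> f y) \<and> (\<forall>y. e < y \<and> y \<le> low (Suc k) \<longrightarrow> f y < d)" for k
  proof (cases "k < n")
    case True
    show ?thesis by (rule descent_start[OF True]) blast
  qed simp
  then show ?thesis using that by metis
qed

lemma point_cases:
  "x \<le> low 0 \<or> (\<exists>k\<le>n. low k \<le> x \<and> x < high k) \<or> (\<exists>k<n. high k \<le> x \<and> x < low (Suc k)) \<or>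
    high n \<le> x"
proof (cases "x \<le> low 0")
  case False
  define k where "k = Max {j. j \<le> n \<and> low j \<le> x}"
  have fin: "finite {j. j \<le> n \<and> low j \<le> x}" by simp
  have k: "k \<le> n" "low k \<le> x"
    using Max_in[OF fin] False unfolding k_def[symmetric] by force+
  have k_max: "\<not> low j \<le> x" if "k < j" "j \<le> n" for j
    using Max_ge[OF fin, of j] that unfolding k_def[symmetric] by auto
  consider "x < high k" | "k = n" | "k < n" "high k \<le> x" using k(1) by linarith
  then show ?thesis
  proof cases
    case 3
    then have "x < low (Suc k)" using k_max[of "Suc k"] by auto
    then show ?thesis using 3 by blast
  qed (use k in auto)
qed simp

text \<open>Here e k is the last point of level d on the k-th descent.\<close>
lemma sublevel_near_b_cases:
  obtains s e where "b < s" "s < d"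
    "\<And>k. k < n \<Longrightarrow> high k \<le> e k \<and> e k < low (Suc k) \<and> s < f (e k) \<and>
      (\<forall>y. e k < y \<and> y \<le> low (Suc k) \<longrightarrow> f y < d)"
    "\<And>x. x \<in> Ioo_ereal t0 t1 \<Longrightarrow> f x \<le> s \<Longrightarrow> x \<le> low 0 \<or> (\<exists>k\<le>n. low k \<le> x \<and> x < high k) \<or>
      (\<exists>k<n. e k < x \<and> x \<le> low (Suc k))"
proof -
  obtain mT where mT: "b < mT" "\<And>x. x \<in> Ioo_ereal t0 t1 \<Longrightarrow> high n \<le> x \<Longrightarrow> mT \<le> f x"
    using tail_lower_bound by blast
  obtain e m where em: "\<And>k. k < n \<Longrightarrow> high k \<le> e k \<and> e k < low (Suc k) \<and> b < m k \<and>
      (\<forall>y. high k \<le> y \<and> y \<le> e k \<longrightarrow> m k \<le> f y) \<and> (\<forall>y. e k < y \<and> y \<le> low (Suc k) \<longrightarrow> f y < d)"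
    using descent_starts by blast
  have "\<forall>\<^sub>F s in at_right b. s < m k" if "k \<in> {..<n}" for k
    using em[of k] that by (intro eventually_mono[OF eventually_at_right_real]) auto
  then have "\<forall>\<^sub>F s in at_right b. \<forall>k\<in>{..<n}. s < m k"
    by (intro eventually_ball_finite) auto
  moreover have "\<forall>\<^sub>F s in at_right b. b < s \<and> s < mT"
    by (rule eventually_mono[OF eventually_at_right_real[OF mT(1)]]) auto
  ultimately obtain s where s: "b < s" "s < mT" "\<And>k. k < n \<Longrightarrow> s < m k"
    using eventually_happens'[OF trivial_limit_at_right_real eventually_conj] by fastforce
  have "mT \<le> d" using mT(2)[OF high_in] f_high by fastforce
  show ?thesis
  proof (rule that[of s e])
    show "b < s" "s < d" using s \<open>mT \<le> d\<close> by auto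
    show "high k \<le> e k \<and> e k < low (Suc k) \<and> s < f (e k) \<and> (\<forall>y. e k < y \<and> y \<le> low (Suc k) \<longrightarrow> f y < d)"
      if "k < n" for k
      using em[OF that] s(3)[OF that] by force
    fix x assume x: "x \<in> Ioo_ereal t0 t1" "f x \<le> s"
    have "\<not> high n \<le> x" using mT(2)[OF x(1)] x(2) s(2) by force
    then consider "x \<le> low 0" | "\<exists>k\<le>n. low k \<le> x \<and> x < high k" | "\<exists>k<n. high k \<le> x \<and> x < low (Suc k)"
      using point_cases[of x] by blast
    then show "x \<le> low 0 \<or> (\<exists>k\<le>n. low k \<le> x \<and> x < high k) \<or> (\<exists>k<n. e k < x \<and> x \<le> low (Suc k))"
    proof cases
      case 3
      then obtain k where k: "k < n" "high k \<le> x" "x < low (Suc k)" by blast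
      have "e k < x"
        using em[OF k(1)] s(3)[OF k(1)] k(2) x(2) by force
      then show ?thesis using k by auto
    qed auto
  qed
qed

lemma connected_to_first_low:
  assumes "x \<in> Ioo_ereal t0 t1" "x \<le> low 0" "b < t"
  shows "connected_component (sublevel f t0 t1 t) (low 0) x"
proof -
  have "connected_component (sublevel f t0 t1 t) x (low 0)"
    using assms below_b_before Icc_subset_Ioo_ereal[OF assms(1) low_in, of 0]
    by (intro connected_component_sublevelI low_in) force+
  then show ?thesis by (rule connected_component_sym)
qed

lemma eventually_reaches_low:
  obtains s where "b < s" "s < d" "\<forall>\<^sub>F t in at_left d. \<forall>x\<in>Ioo_ereal t0 t1. f x \<le> s \<longrightarrow>
    (\<exists>k\<le>n. connected_component (sublevel f t0 t1 t) (low k) x)"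
proof -
  obtain s e where s: "b < s" "s < d"
    and e: "\<And>k. k < n \<Longrightarrow> high k \<le> e k \<and> e k < low (Suc k) \<and> s < f (e k) \<and>
      (\<forall>y. e k < y \<and> y \<le> low (Suc k) \<longrightarrow> f y < d)"
    and cases: "\<And>x. x \<in> Ioo_ereal t0 t1 \<Longrightarrow> f x \<le> s \<Longrightarrow> x \<le> low 0 \<or>
      (\<exists>k\<le>n. low k \<le> x \<and> x < high k) \<or> (\<exists>k<n. e k < x \<and> x \<le> low (Suc k))"
    using sublevel_near_b_cases by blast
  have eI: "e k \<in> Ioo_ereal t0 t1" if "k < n" for k
    using e[OF that] Icc_subset_Ioo_ereal[OF high_in low_in, of k "Suc k"] that by force
  have ascent: "\<forall>\<^sub>F t in at_left d. \<forall>k\<in>{..n}. \<forall>x\<in>{low k..high k}. f x \<le> s \<longrightarrow>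
      connected_component (sublevel f t0 t1 t) (low k) x"
    using s(2) f_high below_d
    by (intro eventually_ball_finite ballI eventually_connected_ascent[OF cont low_in high_in]) auto
  have descent: "\<forall>\<^sub>F t in at_left d. \<forall>k\<in>{..<n}. \<forall>x\<in>{e k..low (Suc k)}. f x \<le> s \<longrightarrow>
      connected_component (sublevel f t0 t1 t) x (low (Suc k))"
    using e by (intro eventually_ball_finite ballI eventually_connected_descent[OF cont eI low_in]) auto
  have "\<forall>\<^sub>F t in at_left d. b < t"
    by (rule eventually_mono[OF eventually_at_left_real[OF b_less_d]]) auto
  with ascent descent have "\<forall>\<^sub>F t in at_left d. \<forall>x\<in>Ioo_ereal t0 t1. f x \<le> s \<longrightarrow>
      (\<exists>k\<le>n. connected_component (sublevel f t0 t1 t) (low k) x)"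
  proof eventually_elim
    case (elim t)
    show ?case
    proof (intro ballI impI)
      fix x assume x: "x \<in> Ioo_ereal t0 t1" "f x \<le> s"
      consider "x \<le> low 0" | "\<exists>k\<le>n. low k \<le> x \<and> x < high k" | "\<exists>k<n. e k < x \<and> x \<le> low (Suc k)"
        using cases[OF x] by blast
      then show "\<exists>k\<le>n. connected_component (sublevel f t0 t1 t) (low k) x"
      proof cases
        case 1
        then show ?thesis using connected_to_first_low[OF x(1) _ elim(3)] by blast
      next
        case 2
        then show ?thesis using elim(1) x(2) by fastforce
      next
        case 3
        then obtain k where "k < n" "e k < x" "x \<le> low (Suc k)" by blast
        then have "connected_component (sublevel f t0 t1 t) x (low (Suc k))"
          using elim(2) x(2) by fastforce
        then show ?thesis using connected_component_sym \<open>k < n\<close> Suc_leI by blast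
      qed
    qed
  qed
  then show ?thesis using that s by blast
qed

lemma lows_not_connected:
  assumes "i < j" "j \<le> n" "t < d"
  shows "\<not> connected_component (sublevel f t0 t1 t) (low i) (low j)"
proof (rule not_connected_component_sublevel)
  show "low i < high i" "t < f (high i)" using assms low_less_high f_high by auto
  have "high i < low (Suc i)" using assms high_less_low by auto
  also have "\<dots> \<le> low j" using assms low_mono by auto
  finally show "high i < low j" .
qed

lemma card_comps_meeting:
  assumes "b < s" "s \<le> t" "t < d"
    and reach: "\<forall>x\<in>Ioo_ereal t0 t1. f x \<le> s \<longrightarrow> (\<exists>k\<le>n. connected_component (sublevel f t0 t1 t) (low k) x)"
  shows "finite (comps_meeting f t0 t1 s t) \<and> card (comps_meeting f t0 t1 s t) = n + 1"
proof -
  define cc where "cc k = connected_component_set (sublevel f t0 t1 t) (low k)" for k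
  have f_low_s: "f (low k) \<le> s" if "k \<le> n" for k
    using f_low[OF that] assms(1) by simp
  have low_sub: "low k \<in> sublevel f t0 t1 t" if "k \<le> n" for k
    using low_in[OF that] f_low_s[OF that] assms(2) unfolding sublevel_def by simp
  have "comps_meeting f t0 t1 s t = cc ` {..n}"
  proof (intro equalityI subsetI)
    fix C assume "C \<in> comps_meeting f t0 t1 s t"
    then obtain x where C: "C \<in> comps f t0 t1 t" "x \<in> C" "f x \<le> s" unfolding comps_meeting_def by blast
    then have "x \<in> Ioo_ereal t0 t1" using comps_subset_nonempty(1)[OF C(1)] unfolding sublevel_def by blast
    then obtain k where k: "k \<le> n" "connected_component (sublevel f t0 t1 t) (low k) x"
      using reach C(3) by blast
    have "C = connected_component_set (sublevel f t0 t1 t) x" by (rule comps_eq_connected_component[OF C(1,2)])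
    also have "\<dots> = cc k"
      using connected_component_eq[of x "sublevel f t0 t1 t" "low k"] k(2) by (simp add: cc_def)
    finally show "C \<in> cc ` {..n}" using k(1) by blast
  next
    fix C assume "C \<in> cc ` {..n}"
    then obtain k where k: "k \<le> n" "C = cc k" by blast
    have "low k \<in> C" using low_sub[OF k(1)] unfolding k(2) cc_def by simp
    then show "C \<in> comps_meeting f t0 t1 s t"
      using connected_component_in_comps[OF low_sub[OF k(1)]] f_low_s[OF k(1)]
      unfolding comps_meeting_def k(2) cc_def by blast
  qed
  moreover have "inj_on cc {..n}"
  proof (rule inj_onI, rule ccontr)
    fix i j assume ij: "i \<in> {..n}" "j \<in> {..n}" "cc i = cc j" "i \<noteq> j"
    have "low j \<in> cc j" using low_sub[of j] ij(2) unfolding cc_def by simp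
    then have "low j \<in> cc i" using ij(3) by simp
    then have "connected_component (sublevel f t0 t1 t) (low i) (low j)"
      unfolding cc_def by simp
    moreover consider "i < j" | "j < i" using ij(4) by linarith
    ultimately show False
      using lows_not_connected[of i j t] lows_not_connected[of j i t] connected_component_sym ij(1,2) assms(3)
      by cases auto
  qed
  ultimately show ?thesis by (simp add: card_image)
qed

lemma eventually_card_comps_meeting:
  "\<forall>\<^sub>F (s, t) in at_right b \<times>\<^sub>F at_left d.
    finite (comps_meeting f t0 t1 s t) \<and> card (comps_meeting f t0 t1 s t) = n + 1"
proof -
  obtain s0 where s0: "b < s0" "s0 < d" and reach: "\<forall>\<^sub>F t in at_left d. \<forall>x\<in>Ioo_ereal t0 t1.
      f x \<le> s0 \<longrightarrow> (\<exists>k\<le>n. connected_component (sublevel f t0 t1 t) (low k) x)"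
    using eventually_reaches_low by blast
  show ?thesis
    unfolding eventually_prod_filter
  proof (intro exI conjI allI impI)
    show "\<forall>\<^sub>F s in at_right b. b < s \<and> s < s0"
      using eventually_at_right_real[OF s0(1)] by simp
    show "\<forall>\<^sub>F t in at_left d. s0 < t \<and> t < d \<and> (\<forall>x\<in>Ioo_ereal t0 t1. f x \<le> s0 \<longrightarrow>
        (\<exists>k\<le>n. connected_component (sublevel f t0 t1 t) (low k) x))"
      using eventually_at_left_real[OF s0(2)] reach by eventually_elim auto
    fix s t assume s: "b < s \<and> s < s0" and t: "s0 < t \<and> t < d \<and> (\<forall>x\<in>Ioo_ereal t0 t1. f x \<le> s0 \<longrightarrow>
        (\<exists>k\<le>n. connected_component (sublevel f t0 t1 t) (low k) x))"
    have "finite (comps_meeting f t0 t1 s t) \<and> card (comps_meeting f t0 t1 s t) = n + 1"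
      using s t by (intro card_comps_meeting) auto
    then show "case (s, t) of (s, t) \<Rightarrow>
        finite (comps_meeting f t0 t1 s t) \<and> card (comps_meeting f t0 t1 s t) = n + 1"
      by simp
  qed
qed

end

section \<open>Windings\<close>

locale winding_setting =
  fixes f :: "real \<Rightarrow> real" and t0 t1 :: ereal and b d p q :: real
  assumes cont: "continuous_on (Ioo_ereal t0 t1) f" and b_less_d: "b < d"
    and p_in: "p \<in> Ioo_ereal t0 t1" and below_b_upto_p: "\<And>x. x \<in> Ioo_ereal t0 t1 \<Longrightarrow> x \<le> p \<Longrightarrow> f x < b"
    and q_in: "q \<in> Ioo_ereal t0 t1" and above_d_from_q: "\<And>x. x \<in> Ioo_ereal t0 t1 \<Longrightarrow> q \<le> x \<Longrightarrow> d < f x"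
begin

abbreviation wb :: "nat \<Rightarrow> ereal" where "wb k \<equiv> wind_b f t0 t1 b d k"

text \<open>wd k is the time t_(k+1)^d of the statement, not t_k^d.\<close>
abbreviation wd :: "nat \<Rightarrow> ereal" where "wd k \<equiv> first_hit f t0 t1 d (wb k)"

lemma next_d_cases:
  assumes "wb k = t0 \<or> (\<exists>r\<in>Ioo_ereal t0 t1. wb k = ereal r \<and> f r = b)"
  shows "(wd k = t1 \<and> (\<forall>t\<in>Ioo_ereal t0 t1. wb k < ereal t \<longrightarrow> f t \<noteq> d)) \<or>
    (\<exists>m\<in>Ioo_ereal t0 t1. wd k = ereal m \<and> wb k < ereal m \<and> f m = d \<and>
      (\<forall>t\<in>Ioo_ereal t0 t1. wb k < ereal t \<and> t < m \<longrightarrow> f t \<noteq> d))"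
  using b_less_d below_b_upto_p assms
  by (intro first_hit_cases[OF cont p_in]) force+

lemma next_b_cases:
  assumes "m \<in> Ioo_ereal t0 t1" "wd k = ereal m" "f m = d"
  shows "(wb (Suc k) = t1 \<and> (\<forall>t\<in>Ioo_ereal t0 t1. m < t \<longrightarrow> f t \<noteq> b)) \<or>
    (\<exists>r\<in>Ioo_ereal t0 t1. wb (Suc k) = ereal r \<and> m < r \<and> f r = b \<and>
      (\<forall>t\<in>Ioo_ereal t0 t1. m < t \<and> t < r \<longrightarrow> f t \<noteq> b))"
proof -
  have "ereal m = t0 \<or> (\<exists>r\<in>Ioo_ereal t0 t1. ereal m = ereal r \<and> f r \<noteq> b)"
    using assms(1,3) b_less_d by auto
  from first_hit_cases[OF cont p_in below_b_upto_p this] show ?thesis using assms(2) by simp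
qed

lemma wind_b_cases: "k = 0 \<or> wb k = t1 \<or> (\<exists>r\<in>Ioo_ereal t0 t1. wb k = ereal r \<and> f r = b)"
proof (induction k)
  case (Suc k)
  show ?case
  proof (cases "wb k = t1")
    case False
    then have "wb k = t0 \<or> (\<exists>r\<in>Ioo_ereal t0 t1. wb k = ereal r \<and> f r = b)" using Suc by auto
    then have "wd k = t1 \<or> (\<exists>m\<in>Ioo_ereal t0 t1. wd k = ereal m \<and> f m = d)"
      using next_d_cases by blast
    then show ?thesis
    proof
      assume "\<exists>m\<in>Ioo_ereal t0 t1. wd k = ereal m \<and> f m = d"
      then obtain m where "m \<in> Ioo_ereal t0 t1" "wd k = ereal m" "f m = d" by blast
      from next_b_cases[OF this] show ?thesis by auto
    qed (simp add: first_hit_at_end)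
  qed (simp add: first_hit_at_end)
qed simp

lemma wind_b_stays_at_end: "wb j = t1 \<Longrightarrow> j \<le> k \<Longrightarrow> wb k = t1"
  by (induction k) (auto simp: first_hit_at_end le_Suc_eq)

lemma windings_iff: "k \<in> windings f t0 t1 b d \<longleftrightarrow> 1 \<le> k \<and> wb k \<noteq> t1"
  using wind_b_cases[of k] unfolding windings_def by (auto simp: mem_Ioo_ereal)

lemma windings_downward_closed:
  "k \<in> windings f t0 t1 b d \<Longrightarrow> 1 \<le> j \<Longrightarrow> j \<le> k \<Longrightarrow> j \<in> windings f t0 t1 b d"
  using wind_b_stays_at_end unfolding windings_iff by blast

lemma winding_data:
  assumes "Suc j \<in> windings f t0 t1 b d"
  obtains m r where "m \<in> Ioo_ereal t0 t1" "r \<in> Ioo_ereal t0 t1" "wd j = ereal m" "wb (Suc j) = ereal r"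
    "wb j < ereal m" "f m = d" "\<forall>t\<in>Ioo_ereal t0 t1. wb j < ereal t \<and> t < m \<longrightarrow> f t \<noteq> d"
    "m < r" "f r = b" "\<forall>t\<in>Ioo_ereal t0 t1. m < t \<and> t < r \<longrightarrow> f t \<noteq> b"
proof -
  have ne: "wb (Suc j) \<noteq> t1" using assms unfolding windings_iff by auto
  then have "wb j \<noteq> t1" using wind_b_stays_at_end[of j "Suc j"] by auto
  then have "wb j = t0 \<or> (\<exists>r\<in>Ioo_ereal t0 t1. wb j = ereal r \<and> f r = b)" using wind_b_cases[of j] by auto
  from next_d_cases[OF this] obtain m where m: "m \<in> Ioo_ereal t0 t1" "wd j = ereal m" "wb j < ereal m"
      "f m = d" "\<forall>t\<in>Ioo_ereal t0 t1. wb j < ereal t \<and> t < m \<longrightarrow> f t \<noteq> d"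
    using ne first_hit_at_end by auto
  from next_b_cases[OF m(1,2,4)] ne obtain r where "r \<in> Ioo_ereal t0 t1" "wb (Suc j) = ereal r" "m < r"
      "f r = b" "\<forall>t\<in>Ioo_ereal t0 t1. m < t \<and> t < r \<longrightarrow> f t \<noteq> b"
    by auto
  then show ?thesis using m that by blast
qed

lemma before_q: "x \<in> Ioo_ereal t0 t1 \<Longrightarrow> f x \<le> d \<Longrightarrow> x < q"
  using above_d_from_q by (meson not_le not_less)

lemma after_p: "x \<in> Ioo_ereal t0 t1 \<Longrightarrow> b \<le> f x \<Longrightarrow> p < x"
  using below_b_upto_p by (meson not_le not_less)

text \<open>Every winding crosses from level d down to level b inside [p, q], which takes at least the
  modulus of uniform continuity of f there for the oscillation d - b.\<close>
lemma windings_spaced: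
  obtains \<eta> where "\<eta> > 0"
    "\<And>k. k \<in> windings f t0 t1 b d \<Longrightarrow> \<exists>r. wb k = ereal r \<and> p + real k * \<eta> < r \<and> r < q"
proof -
  have "uniformly_continuous_on {p..q} f"
    by (rule compact_uniformly_continuous[OF continuous_on_Icc_in_Ioo_ereal[OF cont p_in q_in] compact_Icc])
  then obtain \<eta> where \<eta>: "\<eta> > 0"
      "\<And>x y. x \<in> {p..q} \<Longrightarrow> y \<in> {p..q} \<Longrightarrow> \<bar>x - y\<bar> < \<eta> \<Longrightarrow> \<bar>f x - f y\<bar> < d - b"
    unfolding uniformly_continuous_on_def dist_real_def using b_less_d
    by (metis diff_gt_0_iff_gt)
  have "\<exists>r. wb k = ereal r \<and> p + real k * \<eta> < r \<and> r < q" if "k \<in> windings f t0 t1 b d" for k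
    using that
  proof (induction k)
    case 0
    then show ?case unfolding windings_def by simp
  next
    case (Suc j)
    obtain m r where mr: "m \<in> Ioo_ereal t0 t1" "r \<in> Ioo_ereal t0 t1" "wb (Suc j) = ereal r"
        "wb j < ereal m" "f m = d" "m < r" "f r = b"
      using winding_data[OF Suc.prems] by metis
    have "p < m" "r < q" using after_p[OF mr(1)] before_q[OF mr(2)] mr(5,7) b_less_d by auto
    have "\<not> \<bar>r - m\<bar> < \<eta>"
      using \<eta>(2)[of r m] \<open>p < m\<close> \<open>r < q\<close> mr(5-7) by auto
    then have rm: "m + \<eta> \<le> r" using mr(6) by auto
    show ?case
    proof (cases "j = 0")
      case True
      then show ?thesis using rm \<open>p < m\<close> mr(3) \<open>r < q\<close> by auto
    next
      case False
      then obtain rj where "wb j = ereal rj" "p + real j * \<eta> < rj"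
        using Suc.IH windings_downward_closed[OF Suc.prems] by fastforce
      then show ?thesis using mr(3,4) rm \<open>r < q\<close> by (auto simp: algebra_simps)
    qed
  qed
  then show ?thesis using that \<eta>(1) by blast
qed

lemma finite_windings: "finite (windings f t0 t1 b d)"
proof -
  obtain \<eta> where \<eta>: "\<eta> > 0"
    "\<And>k. k \<in> windings f t0 t1 b d \<Longrightarrow> \<exists>r. wb k = ereal r \<and> p + real k * \<eta> < r \<and> r < q"
    using windings_spaced by blast
  have "windings f t0 t1 b d \<subseteq> {..<nat \<lceil>(q - p) / \<eta>\<rceil>}"
  proof
    fix k assume "k \<in> windings f t0 t1 b d"
    then have "real k * \<eta> < q - p" using \<eta>(2) by force
    then have "real k < (q - p) / \<eta>" using \<eta>(1) by (simp add: field_simps)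
    then have "real k < real (nat \<lceil>(q - p) / \<eta>\<rceil>)" by linarith
    then show "k \<in> {..<nat \<lceil>(q - p) / \<eta>\<rceil>}" by simp
  qed
  then show ?thesis using finite_subset by blast
qed

definition nw :: nat where "nw = card (windings f t0 t1 b d)"

lemma windings_eq: "windings f t0 t1 b d = {1..nw}"
proof (cases "windings f t0 t1 b d = {}")
  case False
  define M where "M = Max (windings f t0 t1 b d)"
  have M: "M \<in> windings f t0 t1 b d" "\<And>k. k \<in> windings f t0 t1 b d \<Longrightarrow> k \<le> M"
    unfolding M_def using Max_in[OF finite_windings False] Max_ge[OF finite_windings] by auto
  have "windings f t0 t1 b d = {1..M}"
  proof
    show "windings f t0 t1 b d \<subseteq> {1..M}" using M(2) unfolding windings_def by auto
    show "{1..M} \<subseteq> windings f t0 t1 b d" using windings_downward_closed[OF M(1)] by auto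
  qed
  then show ?thesis unfolding nw_def by simp
qed (simp add: nw_def)

end

context winding_setting
begin

definition low :: "nat \<Rightarrow> real" where "low k = (if k = 0 then p else real_of_ereal (wb k))"
definition high :: "nat \<Rightarrow> real" where "high k = real_of_ereal (wd k)"

lemma mem_windingsI: "1 \<le> k \<Longrightarrow> k \<le> nw \<Longrightarrow> k \<in> windings f t0 t1 b d"
  using windings_eq by simp

lemma wb_low:
  assumes "k \<le> nw"
  shows "low k \<in> Ioo_ereal t0 t1" "f (low k) \<le> b" "1 \<le> k \<Longrightarrow> wb k = ereal (low k) \<and> f (low k) = b"
proof -
  have "low k \<in> Ioo_ereal t0 t1 \<and> f (low k) \<le> b \<and> (1 \<le> k \<longrightarrow> wb k = ereal (low k) \<and> f (low k) = b)"
  proof (cases k)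
    case 0
    then show ?thesis using p_in below_b_upto_p[OF p_in] by (simp add: low_def)
  next
    case (Suc j)
    then have "Suc j \<in> windings f t0 t1 b d" using mem_windingsI assms by simp
    then obtain r where "r \<in> Ioo_ereal t0 t1" "wb (Suc j) = ereal r" "f r = b"
      using winding_data by blast
    then show ?thesis using Suc by (simp add: low_def)
  qed
  then show "low k \<in> Ioo_ereal t0 t1" "f (low k) \<le> b" "1 \<le> k \<Longrightarrow> wb k = ereal (low k) \<and> f (low k) = b"
    by auto
qed

lemma wb_less: "k \<le> nw \<Longrightarrow> x \<in> Ioo_ereal t0 t1 \<Longrightarrow> low k < x \<Longrightarrow> wb k < ereal x"
  using wb_low(3)[of k] by (cases k) (auto simp: mem_Ioo_ereal)

lemma wd_high:
  assumes k: "k \<le> nw"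
  shows "wd k = ereal (high k)" "high k \<in> Ioo_ereal t0 t1" "f (high k) = d" "wb k < ereal (high k)"
    "\<And>t. t \<in> Ioo_ereal t0 t1 \<Longrightarrow> wb k < ereal t \<Longrightarrow> t < high k \<Longrightarrow> f t \<noteq> d"
proof -
  have "\<exists>m\<in>Ioo_ereal t0 t1. wd k = ereal m \<and> wb k < ereal m \<and> f m = d \<and>
      (\<forall>t\<in>Ioo_ereal t0 t1. wb k < ereal t \<and> t < m \<longrightarrow> f t \<noteq> d)"
  proof (cases "k < nw")
    case True
    then have "Suc k \<in> windings f t0 t1 b d" using mem_windingsI by simp
    then show ?thesis using winding_data by blast
  next
    case False
    have start: "wb k = t0 \<or> (\<exists>r\<in>Ioo_ereal t0 t1. wb k = ereal r \<and> f r = b)"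
      using wb_low[OF k] by (cases k) auto
    have "\<exists>t\<in>Ioo_ereal t0 t1. wb k < ereal t \<and> f t = d"
    proof -
      have lk: "low k \<in> Ioo_ereal t0 t1" "f (low k) \<le> b" using wb_low[OF k] by auto
      have "low k < q" using before_q[OF lk(1)] lk(2) b_less_d by auto
      moreover have "f (low k) \<le> d" "d \<le> f q" using lk(2) b_less_d above_d_from_q[OF q_in] by auto
      ultimately obtain y where y: "low k \<le> y" "y \<le> q" "f y = d"
        using IVT'[of f "low k" d q] continuous_on_Icc_in_Ioo_ereal[OF cont lk(1) q_in] by auto
      have "y \<in> Ioo_ereal t0 t1" using Icc_subset_Ioo_ereal[OF lk(1) q_in] y by auto
      moreover have "low k < y" using y(1,3) lk(2) b_less_d by (cases "y = low k") auto
      ultimately show ?thesis using wb_less[OF k] y(3) by blast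
    qed
    then show ?thesis using next_d_cases[OF start] by blast
  qed
  then show "wd k = ereal (high k)" "high k \<in> Ioo_ereal t0 t1" "f (high k) = d" "wb k < ereal (high k)"
    "\<And>t. t \<in> Ioo_ereal t0 t1 \<Longrightarrow> wb k < ereal t \<Longrightarrow> t < high k \<Longrightarrow> f t \<noteq> d"
    unfolding high_def by auto
qed

lemma low_less_high:
  assumes "k \<le> nw"
  shows "low k < high k"
proof (cases "k = 0")
  case True
  then show ?thesis using wd_high[OF assms] after_p b_less_d by (simp add: low_def)
next
  case False
  then show ?thesis using wd_high(4)[OF assms] wb_low(3)[OF assms] by simp
qed

lemma below_d_on_ascent:
  assumes k: "k \<le> nw" and x: "low k \<le> x" "x < high k"
  shows "f x < d"
proof (rule ccontr)
  assume "\<not> f x < d"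
  have lk: "low k \<in> Ioo_ereal t0 t1" "f (low k) \<le> b" using wb_low[OF k] by auto
  have xI: "x \<in> Ioo_ereal t0 t1" using Icc_subset_Ioo_ereal[OF lk(1) wd_high(2)[OF k]] x by auto
  obtain y where y: "low k \<le> y" "y \<le> x" "f y = d"
    using IVT'[of f "low k" d x] \<open>\<not> f x < d\<close> lk(2) b_less_d x(1)
      continuous_on_Icc_in_Ioo_ereal[OF cont lk(1) xI] by auto
  have yI: "y \<in> Ioo_ereal t0 t1" using Icc_subset_Ioo_ereal[OF lk(1) xI] y by auto
  have "low k < y" using y(1,3) lk(2) b_less_d by (cases "y = low k") auto
  then show False using wd_high(5)[OF k yI wb_less[OF k yI]] y x(2) by auto
qed

lemma high_less_low:
  assumes "k < nw"
  shows "high k < low (Suc k)"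
proof -
  have "Suc k \<in> windings f t0 t1 b d" using assms mem_windingsI by simp
  then obtain m r where "wd k = ereal m" "wb (Suc k) = ereal r" "m < r"
    using winding_data by blast
  then show ?thesis by (simp add: high_def low_def)
qed

lemma above_b_on_descent:
  assumes k: "k < nw" and x: "high k < x" "x < low (Suc k)"
  shows "b < f x"
proof (rule ccontr)
  assume "\<not> b < f x"
  have "Suc k \<in> windings f t0 t1 b d" using k mem_windingsI by simp
  then obtain m r where mr: "m \<in> Ioo_ereal t0 t1" "r \<in> Ioo_ereal t0 t1" "wd k = ereal m"
      "wb (Suc k) = ereal r" "f m = d" "\<forall>t\<in>Ioo_ereal t0 t1. m < t \<and> t < r \<longrightarrow> f t \<noteq> b"
    using winding_data by blast
  have m: "m = high k" "r = low (Suc k)" using mr(3,4) by (auto simp: high_def low_def)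
  have xI: "x \<in> Ioo_ereal t0 t1" using Icc_subset_Ioo_ereal[OF mr(1,2)] x m by auto
  obtain y where y: "m \<le> y" "y \<le> x" "f y = b"
    using IVT2'[of f x b m] \<open>\<not> b < f x\<close> mr(5) b_less_d x(1) m
      continuous_on_Icc_in_Ioo_ereal[OF cont mr(1) xI] by auto
  have "y \<in> Ioo_ereal t0 t1" using Icc_subset_Ioo_ereal[OF mr(1) xI] y by auto
  moreover have "m < y" using y(1,3) mr(5) b_less_d by (cases "y = m") auto
  ultimately show False using mr(6) y x(2) m by auto
qed

lemma above_b_after_last_high:
  assumes x: "x \<in> Ioo_ereal t0 t1" "high nw < x"
  shows "b < f x"
proof (rule ccontr)
  assume "\<not> b < f x"
  have h: "high nw \<in> Ioo_ereal t0 t1" "wd nw = ereal (high nw)" "f (high nw) = d" using wd_high by auto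
  have "Suc nw \<notin> windings f t0 t1 b d" using windings_eq by simp
  then have "wb (Suc nw) = t1" unfolding windings_iff by simp
  then have no_b: "\<forall>t\<in>Ioo_ereal t0 t1. high nw < t \<longrightarrow> f t \<noteq> b"
    using next_b_cases[OF h] by (auto simp: mem_Ioo_ereal)
  obtain y where y: "high nw \<le> y" "y \<le> x" "f y = b"
    using IVT2'[of f x b "high nw"] \<open>\<not> b < f x\<close> h(3) b_less_d x(2)
      continuous_on_Icc_in_Ioo_ereal[OF cont h(1) x(1)] by auto
  have "y \<in> Ioo_ereal t0 t1" using Icc_subset_Ioo_ereal[OF h(1) x(1)] y by auto
  moreover have "high nw < y" using y(1,3) h(3) b_less_d by (cases "y = high nw") auto
  ultimately show False using no_b y(3) by auto
qed

end

sublocale winding_setting \<subseteq> zigzag f t0 t1 b d q nw low high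
proof unfold_locales
  fix x assume "x \<in> Ioo_ereal t0 t1" "x \<le> low 0"
  then show "f x \<le> b" using below_b_upto_p by (simp add: low_def less_imp_le)
qed (use cont b_less_d wb_low wd_high low_less_high high_less_low below_d_on_ascent
    above_b_on_descent above_b_after_last_high q_in above_d_from_q in auto)

section \<open>Straddling bars\<close>

lemma eventually_less_at_right_at_left:
  fixes b d :: real
  assumes "b < d"
  shows "\<forall>\<^sub>F (s, t) in at_right b \<times>\<^sub>F at_left d. s < t"
  unfolding eventually_prod_filter
proof (intro exI conjI allI impI)
  show "\<forall>\<^sub>F s in at_right b. s < (b + d) / 2" "\<forall>\<^sub>F t in at_left d. (b + d) / 2 < t"
    using eventually_at_right_real[of b "(b + d) / 2"] eventually_at_left_real[of "(b + d) / 2" d] assms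
    by (auto elim: eventually_mono)
qed auto

lemma eventually_at_right_at_leftE:
  fixes b d :: real
  assumes "b < d" "\<forall>\<^sub>F (s, t) in at_right b \<times>\<^sub>F at_left d. P s t"
  obtains ss tt where "b < ss" "ss < tt" "tt < d"
    "\<And>s t. b < s \<Longrightarrow> s \<le> ss \<Longrightarrow> tt \<le> t \<Longrightarrow> t < d \<Longrightarrow> P s t"
proof -
  obtain Pf Pg where P: "eventually Pf (at_right b)" "eventually Pg (at_left d)"
      "\<And>s t. Pf s \<Longrightarrow> Pg t \<Longrightarrow> P s t"
    using assms(2) unfolding eventually_prod_filter by auto
  obtain b' d' where "b < b'" "\<And>s. b < s \<Longrightarrow> s < b' \<Longrightarrow> Pf s" "d' < d" "\<And>t. d' < t \<Longrightarrow> t < d \<Longrightarrow> Pg t"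
    using P(1,2) unfolding eventually_at_right_field eventually_at_left_field by metis
  then show ?thesis
    using assms(1) P(3)
    by (intro that[of "(b + min b' ((b + d) / 2)) / 2" "(max d' ((b + d) / 2) + d) / 2"]) auto
qed

lemma straddles_iff_subset:
  assumes J: "is_interval J" and "b < d"
  shows "straddles J b d \<longleftrightarrow> {b<..<d} \<subseteq> J"
proof
  assume "straddles J b d"
  then have st: "Inf (ereal ` J) \<le> ereal b" "ereal d \<le> Sup (ereal ` J)"
    unfolding straddles_def bar_birth_def bar_death_def by auto
  show "{b<..<d} \<subseteq> J"
  proof
    fix x assume x: "x \<in> {b<..<d}"
    have "Inf (ereal ` J) < ereal x" using st(1) x by (simp add: le_less_trans)
    moreover have "ereal x < ereal d" using x by simp
    then have "ereal x < Sup (ereal ` J)" using st(2) by (rule less_le_trans)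
    ultimately obtain y z where "y \<in> J" "y < x" "z \<in> J" "x < z" unfolding Inf_less_iff less_Sup_iff by auto
    then show "x \<in> J" using J unfolding is_interval_1 by (meson less_imp_le)
  qed
next
  assume sub: "{b<..<d} \<subseteq> J"
  have "Inf (ereal ` J) \<le> ereal b"
  proof (rule dense_ge_bounded[of "ereal b" "ereal d"])
    fix w assume w: "ereal b < w" "w < ereal d"
    then obtain r where "w = ereal r" by (cases w) auto
    then have "w \<in> ereal ` J" using w sub by auto
    then show "Inf (ereal ` J) \<le> w" by (rule Inf_lower)
  qed (use assms in simp)
  moreover have "ereal d \<le> Sup (ereal ` J)"
  proof (rule dense_le_bounded[of "ereal b" "ereal d"])
    fix w assume w: "ereal b < w" "w < ereal d"
    then obtain r where "w = ereal r" by (cases w) auto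
    then have "w \<in> ereal ` J" using w sub by auto
    then show "w \<le> Sup (ereal ` J)" by (rule Sup_upper)
  qed (use assms in simp)
  ultimately show "straddles J b d"
    unfolding straddles_def bar_birth_def bar_death_def using assms by simp
qed

lemma bars_containing_antimono:
  assumes "\<And>a. is_interval (J a)" "s \<le> s'" "s' \<le> t'" "t' \<le> t"
  shows "bars_containing J s t \<subseteq> bars_containing J s' t'"
proof
  fix a assume "a \<in> bars_containing J s t"
  then have "\<forall>x. s \<le> x \<and> x \<le> t \<longrightarrow> x \<in> J a"
    using assms(1)[of a] unfolding bars_containing_def is_interval_1 by blast
  then show "a \<in> bars_containing J s' t'" using assms(2-4) unfolding bars_containing_def by auto
qed

text \<open>As s decreases to b and t increases to d, the bars containing s and t decrease to those
  straddling [b, d]; once their number is constant, the sets themselves are.\<close>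
lemma card_straddling_bars:
  assumes J: "\<And>a. is_interval (J a)" and "b < d"
    and ev: "\<forall>\<^sub>F (s, t) in at_right b \<times>\<^sub>F at_left d.
      finite (bars_containing J s t) \<and> card (bars_containing J s t) = n"
  shows "finite {a. straddles (J a) b d} \<and> card {a. straddles (J a) b d} = n"
proof -
  obtain ss tt where sstt: "b < ss" "ss < tt" "tt < d" and stable: "\<And>s t. b < s \<Longrightarrow> s \<le> ss \<Longrightarrow>
      tt \<le> t \<Longrightarrow> t < d \<Longrightarrow> finite (bars_containing J s t) \<and> card (bars_containing J s t) = n"
    using eventually_at_right_at_leftE[OF \<open>b < d\<close> ev] by blast
  let ?A = "bars_containing J ss tt"
  have A: "finite ?A" "card ?A = n" using stable[of ss tt] sstt by auto
  have A_eq: "bars_containing J s t = ?A" if "b < s" "s \<le> ss" "tt \<le> t" "t < d" for s t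
    using card_subset_eq[OF A(1) bars_containing_antimono[OF J that(2) _ that(3)]] stable[OF that] A sstt
    by simp
  have "{a. straddles (J a) b d} = ?A"
  proof (intro equalityI subsetI)
    fix a assume "a \<in> {a. straddles (J a) b d}"
    then show "a \<in> ?A"
      using straddles_iff_subset[OF J \<open>b < d\<close>] sstt unfolding bars_containing_def by auto
  next
    fix a assume a: "a \<in> ?A"
    have "x \<in> J a" if "b < x" "x < d" for x
    proof -
      consider "x \<le> ss" | "tt \<le> x" | "ss \<le> x" "x \<le> tt" by linarith
      then show ?thesis
      proof cases
        case 1
        then show ?thesis using a A_eq[of x tt] that sstt unfolding bars_containing_def by auto
      next
        case 2
        then show ?thesis using a A_eq[of ss x] that sstt unfolding bars_containing_def by auto
      next
        case 3
        then show ?thesis using a J[of a] unfolding bars_containing_def is_interval_1 by blast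
      qed
    qed
    then show "a \<in> {a. straddles (J a) b d}"
      using straddles_iff_subset[OF J \<open>b < d\<close>] by auto
  qed
  then show ?thesis using A by simp
qed

theorem mainTheorem1:
  fixes f :: "real \<Rightarrow> real" and t0 t1 :: ereal and b d :: real
    and J :: "'i \<Rightarrow> real set" and v :: "'i \<Rightarrow> real \<Rightarrow> real set \<Rightarrow> 'k::field"
  assumes "t0 < t1"
    and "continuous_on (Ioo_ereal t0 t1) f"
    and "b < d"
    and "Limsup (left_end_filter t0) (\<lambda>t. ereal (f t)) < ereal b"
    and "ereal d < Liminf (right_end_filter t1) (\<lambda>t. ereal (f t))"
    and "PH0_barcode f t0 t1 J v"
  shows "finite {a. straddles (J a) b d} \<and> finite (windings f t0 t1 b d) \<and>
         card {a. straddles (J a) b d} = card (windings f t0 t1 b d) + 1"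
proof -
  obtain p where "p \<in> Ioo_ereal t0 t1" "\<And>x. x \<in> Ioo_ereal t0 t1 \<Longrightarrow> x \<le> p \<Longrightarrow> f x < b"
    using below_near_left_end[OF assms(1,4)] by blast
  moreover obtain q where "q \<in> Ioo_ereal t0 t1" "\<And>x. x \<in> Ioo_ereal t0 t1 \<Longrightarrow> q \<le> x \<Longrightarrow> d < f x"
    using above_near_right_end[OF assms(1,5)] by blast
  ultimately interpret winding_setting f t0 t1 b d p q
    using assms(2,3) by unfold_locales
  have rank: "finite (bars_containing J s t) \<and> card (bars_containing J s t) = nw + 1"
    if "s < t" "finite (comps_meeting f t0 t1 s t) \<and> card (comps_meeting f t0 t1 s t) = nw + 1" for s t
    using card_bars_containing[OF assms(6) less_imp_le[OF that(1)]] that(2) by simp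
  have "\<forall>\<^sub>F (s, t) in at_right b \<times>\<^sub>F at_left d.
      finite (bars_containing J s t) \<and> card (bars_containing J s t) = nw + 1"
    using eventually_conj[OF eventually_less_at_right_at_left[OF assms(3)] eventually_card_comps_meeting]
    by (rule eventually_mono) (auto split: prod.splits dest!: rank)
  moreover have "\<And>a. is_interval (J a)" using assms(6) unfolding PH0_barcode_def by blast
  ultimately show ?thesis
    using card_straddling_bars[OF _ assms(3)] finite_windings unfolding nw_def by blast
qed

end
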